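(* Let $\mathfrak{g}$ be a complex semisimple Lie algebra, $\mathfrak{h}\subset\mathfrak{g}$ a Cartan subalgebra, and $e,h,f$ a principal $\mathfrak{sl}_2$-triple in $\mathfrak{g}$ with $h\in\mathfrak{h}$. Then the Poisson centralizer of $h[-1]$ in $S(\mathfrak{g}_-)$ is $S(\mathfrak{h}_-)$.
   Context: $\mathfrak{g}_-=\mathfrak{g}\otimes t^{-1}\mathbb{C}[t^{-1}]$, $\mathfrak{h}_-=\mathfrak{h}\otimes t^{-1}\mathbb{C}[t^{-1}]\subset\mathfrak{g}_-$, and $x[-m]=x\otimes t^{-m}$. $S(\mathfrak{g}_-)$ carries the Poisson bracket extending the Lie bracket of $\mathfrak{g}_-$ (i.e. $\{x,y\}=[x,y]$ for $x,y\in\mathfrak{g}_-$); the Poisson centralizer of $u$ is $\{a\in S(\mathfrak{g}_-):\{u,a\}=0\}$. *)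

theory Defs
  imports Complex_Main "HOL-Library.Function_Algebras" "HOL-Library.Poly_Mapping"
begin

definition cscale :: "complex \<Rightarrow> ('n \<Rightarrow> complex) \<Rightarrow> ('n \<Rightarrow> complex)" where
  "cscale c x = (\<lambda>i. c * x i)"

abbreviation cspan :: "('n \<Rightarrow> complex) set \<Rightarrow> ('n \<Rightarrow> complex) set" where
  "cspan \<equiv> module.span cscale"

abbreviation csubspace :: "('n \<Rightarrow> complex) set \<Rightarrow> bool" where
  "csubspace \<equiv> module.subspace cscale"

abbreviation cdim :: "('n \<Rightarrow> complex) set \<Rightarrow> nat" where
  "cdim \<equiv> vector_space.dim cscale"

definition lie_algebra :: "(('n::finite \<Rightarrow> complex) \<Rightarrow> ('n \<Rightarrow> complex) \<Rightarrow> ('n \<Rightarrow> complex)) \<Rightarrow> bool" where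
  "lie_algebra br \<longleftrightarrow>
     (\<forall>x y z. br (x + y) z = br x z + br y z) \<and>
     (\<forall>c x z. br (cscale c x) z = cscale c (br x z)) \<and>
     (\<forall>x y z. br x (y + z) = br x y + br x z) \<and>
     (\<forall>c x z. br x (cscale c z) = cscale c (br x z)) \<and>
     (\<forall>x. br x x = 0) \<and>
     (\<forall>x y z. br x (br y z) + br y (br z x) + br z (br x y) = 0)"

definition lie_subalgebra where
  "lie_subalgebra br S \<longleftrightarrow> csubspace S \<and> (\<forall>x\<in>S. \<forall>y\<in>S. br x y \<in> S)"

definition lie_ideal where
  "lie_ideal br I \<longleftrightarrow> csubspace I \<and> (\<forall>x y. y \<in> I \<longrightarrow> br x y \<in> I)"

fun derived_series where
  "derived_series br S 0 = S"
| "derived_series br S (Suc k) =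
     cspan {br a b | a b. a \<in> derived_series br S k \<and> b \<in> derived_series br S k}"

definition solvable where
  "solvable br S \<longleftrightarrow> (\<exists>k. derived_series br S k = {0})"

definition semisimple where
  "semisimple br \<longleftrightarrow> lie_algebra br \<and> (\<forall>I. lie_ideal br I \<and> solvable br I \<longrightarrow> I = {0})"

definition nilpotent_sub where
  "nilpotent_sub br H \<longleftrightarrow>
     (\<exists>k. \<forall>xs y. set xs \<subseteq> H \<and> length xs = k \<and> y \<in> H \<longrightarrow> foldr br xs y = 0)"

definition normalizer where
  "normalizer br H = {x. \<forall>y\<in>H. br x y \<in> H}"

definition cartan_subalgebra where
  "cartan_subalgebra br H \<longleftrightarrow> lie_subalgebra br H \<and> nilpotent_sub br H \<and> normalizer br H = H"

definition centralizer where
  "centralizer br x = {y. br x y = 0}"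

definition sl2_triple where
  "sl2_triple br e h f \<longleftrightarrow>
     br h e = cscale 2 e \<and> br h f = cscale (-2) f \<and> br e f = h \<and> e \<noteq> 0"

text \<open>Principal sl2-triple: e is a principal (= regular) nilpotent, i.e. its centralizer has
  dimension equal to the rank (the dimension of a Cartan subalgebra).\<close>
definition principal_sl2_triple where
  "principal_sl2_triple br H e h f \<longleftrightarrow>
     sl2_triple br e h f \<and> cdim (centralizer br e) = cdim H"

text \<open>Variable (i,k) stands for b_i[-(k+1)] = b_i \<otimes> t^(-(k+1)), where b_i is the i-th
  coordinate basis vector of g. Polynomials in these variables form S(g_-).\<close>
type_synonym 'n Spoly = "(('n \<times> nat) \<Rightarrow>\<^sub>0 nat) \<Rightarrow>\<^sub>0 complex"

definition basisv :: "'n \<Rightarrow> ('n \<Rightarrow> complex)" where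
  "basisv i = (\<lambda>j. if j = i then 1 else 0)"

text \<open>x[-(k+1)] as a linear element of S(g_-).\<close>
definition loopv :: "('n::finite \<Rightarrow> complex) \<Rightarrow> nat \<Rightarrow> 'n Spoly" where
  "loopv x k = (\<Sum>i\<in>UNIV. Poly_Mapping.single (Poly_Mapping.single (i, k) 1) (x i))"

definition vars :: "'n Spoly \<Rightarrow> ('n \<times> nat) set" where
  "vars P = \<Union> (Poly_Mapping.keys ` Poly_Mapping.keys P)"

definition pderiv_var :: "('n \<times> nat) \<Rightarrow> 'n Spoly \<Rightarrow> 'n Spoly" where
  "pderiv_var v P = (\<Sum>\<mu>\<in>Poly_Mapping.keys P.
      Poly_Mapping.single (\<mu> - Poly_Mapping.single v 1)
        (of_nat (Poly_Mapping.lookup \<mu> v) * Poly_Mapping.lookup P \<mu>))"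

text \<open>The Poisson bracket on S(g_-) extending the Lie bracket of g_-:
  {P,Q} = sum_{a,b} dP/dX_a dQ/dX_b [X_a, X_b], with
  [b_i[-(k+1)], b_j[-(l+1)]] = [b_i,b_j][-(k+l+2)].\<close>
definition poisson :: "(('n::finite \<Rightarrow> complex) \<Rightarrow> ('n \<Rightarrow> complex) \<Rightarrow> ('n \<Rightarrow> complex))
     \<Rightarrow> 'n Spoly \<Rightarrow> 'n Spoly \<Rightarrow> 'n Spoly" where
  "poisson br P Q = (\<Sum>a\<in>vars P. \<Sum>b\<in>vars Q.
      pderiv_var a P * pderiv_var b Q *
      loopv (br (basisv (fst a)) (basisv (fst b))) (snd a + snd b + 1))"

definition poisson_centralizer where
  "poisson_centralizer br u = {a. poisson br u a = 0}"

inductive_set Sh :: "('n::finite \<Rightarrow> complex) set \<Rightarrow> 'n Spoly set" for H where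
  const: "Poly_Mapping.single 0 c \<in> Sh H"
| gen: "x \<in> H \<Longrightarrow> loopv x k \<in> Sh H"
| add: "P \<in> Sh H \<Longrightarrow> Q \<in> Sh H \<Longrightarrow> P + Q \<in> Sh H"
| mult: "P \<in> Sh H \<Longrightarrow> Q \<in> Sh H \<Longrightarrow> P * Q \<in> Sh H"

end

theory Submission
  imports Defs
begin

text \<open>Write \<open>A, E, F\<close> for \<open>ad h, ad e, ad f\<close>. The \<open>sl\<^sub>2\<close> relations alone give \<open>ker A\<^sup>2 = ker A\<close> and
  \<open>dim ker A \<le> dim ker E\<close>: \<open>E\<^sup>j\<close> maps the vectors of \<open>ker A\<^sup>2\<close> killed by \<open>E\<^sup>j\<^sup>+\<^sup>1\<close> to highest weight
  vectors of weight \<open>2j\<close>, and \<open>F\<^sup>j\<close> maps those injectively back into \<open>ker A\<close>. As \<open>H\<close> is nilpotent and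
  contains \<open>h\<close>, \<open>H \<subseteq> ker A\<close>, so \<open>dim ker E = dim H\<close> forces \<open>H = ker A\<close>; and \<open>A\<close> has a group inverse \<open>G\<close>.

  The bracket with \<open>h[-1]\<close> is the derivation \<open>D x[-m] = [h, x][-m-1]\<close> of \<open>S(g\<^sub>-)\<close>. Let \<open>N\<close> be the
  derivation induced by the projection \<open>A G\<close> onto \<open>range A\<close> along \<open>ker A\<close>, and \<open>L x[-m] = (m - 1) (G x)[-m+1]\<close>.
  Then \<open>[L, D] = N\<close>, \<open>[N, D] = [N, L] = 0\<close>, and \<open>L\<close> is locally nilpotent since it lowers the grading by \<open>m\<close>.
  If \<open>D Q = 0\<close> and \<open>N Q = d Q\<close> with \<open>d > 0\<close>, then \<open>D (L\<^sup>j\<^sup>+\<^sup>1 Q) = -(j + 1) d L\<^sup>j Q\<close>, and descending from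
  a vanishing power of \<open>L\<close> gives \<open>Q = 0\<close>. As \<open>N\<close> is diagonalisable with eigenvalues \<open>0, 1\<close> on generators
  and commutes with \<open>D\<close>, the kernel of \<open>D\<close> is the \<open>N\<close>-weight-\<open>0\<close> part, which is \<open>S(h\<^sub>-)\<close>.\<close>

lemma sum_fun_apply: "(sum f A) x = (\<Sum>a\<in>A. f a x)"
  by (induct A rule: infinite_finite_induct) auto

lemma vector_space_cscale: "vector_space (cscale :: complex \<Rightarrow> ('n \<Rightarrow> complex) \<Rightarrow> _)"
  by unfold_locales (auto simp: cscale_def fun_eq_iff algebra_simps)

abbreviation clinear :: "(('n \<Rightarrow> complex) \<Rightarrow> ('n \<Rightarrow> complex)) \<Rightarrow> bool" where
  "clinear \<equiv> Vector_Spaces.linear cscale cscale"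

lemma clinearI:
  assumes "\<And>x y. T (x + y) = T x + T y" "\<And>c x. T (cscale c x) = cscale c (T x)"
  shows "clinear T"
  using assms vector_space_cscale by (auto simp: Vector_Spaces.linear_iff)

lemma clinear_funpow: "clinear (T :: ('n \<Rightarrow> complex) \<Rightarrow> _) \<Longrightarrow> clinear (T ^^ k)"
proof (induct k)
  case 0
  show ?case using vector_space.linear_id[OF vector_space_cscale] by (simp add: id_def)
next
  case (Suc k)
  then show ?case using Vector_Spaces.linear_compose[of cscale cscale "T ^^ k" cscale T]
    by (simp add: comp_def)
qed

lemma basisv_expansion: "(x :: 'n::finite \<Rightarrow> complex) = (\<Sum>i\<in>UNIV. cscale (x i) (basisv i))"
  by (auto simp: fun_eq_iff cscale_def basisv_def sum_fun_apply if_distrib cong: if_cong)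

lemma inj_basisv: "inj basisv"
  by (auto simp: inj_def basisv_def fun_eq_iff split: if_splits)

lemma span_basisv: "cspan (range (basisv :: 'n::finite \<Rightarrow> _)) = UNIV"
proof -
  interpret vector_space "cscale :: complex \<Rightarrow> ('n \<Rightarrow> complex) \<Rightarrow> _" by (rule vector_space_cscale)
  have "x \<in> span (range basisv)" for x :: "'n \<Rightarrow> complex"
    by (subst basisv_expansion) (intro span_sum span_scale span_base; auto)
  then show ?thesis by auto
qed

lemma independent_basisv: "\<not> module.dependent cscale (range (basisv :: 'n::finite \<Rightarrow> _))"
proof
  interpret vector_space "cscale :: complex \<Rightarrow> ('n \<Rightarrow> complex) \<Rightarrow> _" by (rule vector_space_cscale)
  assume "dependent (range (basisv :: 'n \<Rightarrow> _))"
  then obtain u j where "u (basisv j) \<noteq> 0"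
    and "(\<Sum>v\<in>range basisv. cscale (u v) v) = (0 :: 'n \<Rightarrow> complex)"
    using dependent_finite[of "range basisv"] by auto
  moreover have "(\<Sum>v\<in>range basisv. cscale (u v) v) j
      = (\<Sum>i\<in>UNIV. cscale (u (basisv i)) (basisv i) j)"
    by (simp add: sum_fun_apply sum.reindex[OF inj_basisv])
  moreover have "\<dots> = u (basisv j)"
    by (simp add: cscale_def basisv_def if_distrib cong: if_cong)
  ultimately show False by simp
qed

interpretation cvs: finite_dimensional_vector_space
  "cscale :: complex \<Rightarrow> ('n::finite \<Rightarrow> complex) \<Rightarrow> _" "range basisv"
  using vector_space_cscale span_basisv independent_basisv
  by (auto simp: finite_dimensional_vector_space_def finite_dimensional_vector_space_axioms_def)

interpretation cvs2: finite_dimensional_vector_space_pair_1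
  "cscale :: complex \<Rightarrow> ('n::finite \<Rightarrow> complex) \<Rightarrow> _" "range basisv"
  "cscale :: complex \<Rightarrow> ('n \<Rightarrow> complex) \<Rightarrow> _"
  by unfold_locales

lemma cscale_simps [simp]:
  "cscale 0 x = 0" "cscale c 0 = 0" "cscale 1 x = x"
  "cscale c (x + y) = cscale c x + cscale c y"
  "cscale c (x - y) = cscale c x - cscale c y"
  "cscale c (- x) = - cscale c x"
  "cscale c (cscale d x) = cscale (c * d) x"
  by (auto simp: cscale_def fun_eq_iff algebra_simps)

lemma cscale_diff_left: "cscale (c - d) x = cscale c x - cscale d x"
  by (auto simp: cscale_def fun_eq_iff algebra_simps)

lemma clinear_kernel_subspace: "clinear (T :: ('n::finite \<Rightarrow> complex) \<Rightarrow> _) \<Longrightarrow> csubspace {x. T x = 0}"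
  by (rule cvs2.linear_subspace_kernel)

lemma clinear_image_subspace:
  "clinear (T :: ('n::finite \<Rightarrow> complex) \<Rightarrow> _) \<Longrightarrow> csubspace S \<Longrightarrow> csubspace (T ` S)"
  by (rule cvs2.linear_subspace_image)

lemma cdim_sums_direct:
  assumes "csubspace S" "csubspace T" "S \<inter> T \<subseteq> {0}"
  shows "cdim {x + y |x y. x \<in> S \<and> y \<in> T} = cdim S + cdim (T :: ('n::finite \<Rightarrow> complex) set)"
proof -
  have "cdim (S \<inter> T) = 0" using assms(3) cvs.dim_eq_0 by blast
  then show ?thesis using cvs.dim_sums_Int[OF assms(1,2)] by (simp del: cvs.dim_eq_0)
qed

lemma span_Int_span_Diff:
  assumes "cvs.independent C" "B \<subseteq> C"
  shows "cvs.span B \<inter> cvs.span (C - B) \<subseteq> {0 :: 'n::finite \<Rightarrow> complex}"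
proof -
  have indep: "cvs.independent B" "cvs.independent (C - B)"
    using assms cvs.independent_mono[of C] by auto
  have "B \<union> (C - B) = C" using assms(2) by auto
  then have "cdim (cvs.span C) + cdim (cvs.span B \<inter> cvs.span (C - B))
      = cdim (cvs.span B) + cdim (cvs.span (C - B))"
    using cvs.dim_sums_Int[OF cvs.subspace_span cvs.subspace_span, of B "C - B"]
      cvs.span_Un[of B "C - B"]
    by metis
  moreover have "finite C" using assms(1) cvs.finiteI_independent by blast
  then have "card C = card B + card (C - B)"
    using assms(2) by (simp add: card_Diff_subset card_mono finite_subset)
  ultimately show ?thesis by (simp add: cvs.dim_eq_card_independent assms(1) indep)
qed

lemma cdim_le_cdim_kernel_plus_cdim_image:
  fixes T :: "('n::finite \<Rightarrow> complex) \<Rightarrow> ('n \<Rightarrow> complex)"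
  assumes T: "clinear T" and S: "csubspace S"
  shows "cdim S \<le> cdim (S \<inter> {x. T x = 0}) + cdim (T ` S)"
proof -
  define K where "K = S \<inter> {x. T x = 0}"
  obtain B where B: "B \<subseteq> K" "cvs.independent B" "K \<subseteq> cvs.span B" "card B = cdim K"
    using cvs.basis_exists[of K] by blast
  obtain C where C: "B \<subseteq> C" "C \<subseteq> S" "cvs.independent C" "S \<subseteq> cvs.span C"
    using cvs.maximal_independent_subset_extend[of B S] B(1,2) by (auto simp: K_def)
  define D where "D = C - B"
  have "finite C" using C(3) cvs.finiteI_independent by blast
  then have card_C: "card C = card B + card D"
    using C(1) by (simp add: D_def card_Diff_subset card_mono finite_subset)
  have indep_D: "cvs.independent D" using C(3) cvs.independent_mono[of C D] by (auto simp: D_def)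
  have span_D: "cvs.span D \<subseteq> S"
    using C(2) S cvs.span_minimal[of D S] by (auto simp: D_def)
  have "inj_on T (cvs.span D)"
  proof (rule inj_onI)
    fix x y assume xy: "x \<in> cvs.span D" "y \<in> cvs.span D" "T x = T y"
    then have "x - y \<in> cvs.span D" using cvs.span_diff by blast
    moreover have "x - y \<in> K"
      using xy span_D cvs2.linear_diff[OF T] cvs.subspace_diff[OF S] by (simp add: K_def subset_iff)
    ultimately show "x = y" using B(3) span_Int_span_Diff[OF C(3,1)] by (auto simp: D_def)
  qed
  then have "cdim (T ` cvs.span D) = card D"
    using cvs2.dim_image_eq[OF T] cvs.dim_span_eq_card_independent[OF indep_D]
    by (simp add: cvs.span_span)
  moreover have "cdim (T ` cvs.span D) \<le> cdim (T ` S)"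
    using span_D by (intro cvs.dim_subset) blast
  moreover have "cdim S = card C" using cvs.basis_card_eq_dim[OF C(2) C(4) C(3)] by simp
  ultimately show ?thesis using card_C B(4) unfolding K_def by linarith
qed

declare zero_fun_apply [simp del] plus_fun_apply [simp del] minus_apply [simp del]
  uminus_apply [simp del]

definition subspace_sum :: "'i set \<Rightarrow> ('i \<Rightarrow> ('n \<Rightarrow> complex) set) \<Rightarrow> ('n \<Rightarrow> complex) set" where
  "subspace_sum I S = {(\<Sum>i\<in>I. v i) | v. \<forall>i\<in>I. v i \<in> S i}"

lemma subspace_sum_empty: "subspace_sum {} S = {0}"
  by (auto simp: subspace_sum_def)

lemma subspace_sum_insert:
  assumes "a \<notin> I" "finite I"
  shows "subspace_sum (insert a I) S = {x + y | x y. x \<in> S a \<and> y \<in> subspace_sum I S}"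
proof (intro set_eqI iffI)
  fix z assume "z \<in> subspace_sum (insert a I) S"
  then obtain v where "z = v a + (\<Sum>i\<in>I. v i)" "\<forall>i\<in>insert a I. v i \<in> S i"
    using assms by (auto simp: subspace_sum_def)
  then show "z \<in> {x + y | x y. x \<in> S a \<and> y \<in> subspace_sum I S}"
    by (auto simp: subspace_sum_def)
next
  fix z assume "z \<in> {x + y | x y. x \<in> S a \<and> y \<in> subspace_sum I S}"
  then obtain x v where xv: "z = x + (\<Sum>i\<in>I. v i)" "x \<in> S a" "\<forall>i\<in>I. v i \<in> S i"
    by (auto simp: subspace_sum_def)
  have "(\<Sum>i\<in>I. (v(a := x)) i) = (\<Sum>i\<in>I. v i)" using assms(1) by (intro sum.cong) auto
  then have "z = (\<Sum>i\<in>insert a I. (v(a := x)) i)" using xv(1) assms by simp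
  then show "z \<in> subspace_sum (insert a I) S" using xv(2,3) by (auto simp: subspace_sum_def)
qed

lemma subspace_subspace_sum:
  assumes "finite I" "\<And>i. i \<in> I \<Longrightarrow> csubspace (S i)"
  shows "csubspace (subspace_sum I (S :: _ \<Rightarrow> ('n::finite \<Rightarrow> complex) set))"
  using assms
  by (induct I rule: finite_induct)
    (simp_all add: subspace_sum_empty subspace_sum_insert cvs.subspace_sums)

lemma subspace_sum_subset:
  assumes "csubspace T" "\<And>i. i \<in> I \<Longrightarrow> S i \<subseteq> T"
  shows "subspace_sum I (S :: _ \<Rightarrow> ('n::finite \<Rightarrow> complex) set) \<subseteq> T"
proof
  fix z assume "z \<in> subspace_sum I S"
  then obtain v where "z = (\<Sum>i\<in>I. v i)" "\<forall>i\<in>I. v i \<in> S i" by (auto simp: subspace_sum_def)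
  then show "z \<in> T" using assms cvs.subspace_sum[OF assms(1), of I v] by blast
qed


lemma cdim_subspace_sum_direct:
  assumes "finite I" "\<And>i. i \<in> I \<Longrightarrow> csubspace (S i)"
    and "\<And>v. \<forall>i\<in>I. v i \<in> S i \<Longrightarrow> (\<Sum>i\<in>I. v i) = 0 \<Longrightarrow> \<forall>i\<in>I. v i = 0"
  shows "cdim (subspace_sum I (S :: _ \<Rightarrow> ('n::finite \<Rightarrow> complex) set)) = (\<Sum>i\<in>I. cdim (S i))"
  using assms
proof (induct I rule: finite_induct)
  case empty then show ?case by (simp add: subspace_sum_empty)
next
  case (insert a I)
  have sub_a: "csubspace (S a)" using insert.prems(1) by simp
  have upd: "(\<Sum>i\<in>I. (v(a := w)) i) = (\<Sum>i\<in>I. v i)" for v w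
    using insert.hyps(2) by (intro sum.cong) auto
  have dim_I: "cdim (subspace_sum I S) = (\<Sum>i\<in>I. cdim (S i))"
  proof (rule insert.hyps(3))
    fix v assume v: "\<forall>i\<in>I. v i \<in> S i" "(\<Sum>i\<in>I. v i) = 0"
    have "(\<Sum>i\<in>insert a I. (v(a := 0)) i) = 0"
      using insert.hyps(1,2) v(2) by (simp add: upd fun_upd_same del: fun_upd_apply)
    moreover have "\<forall>i\<in>insert a I. (v(a := 0)) i \<in> S i" using v(1) cvs.subspace_0[OF sub_a] by simp
    ultimately have "\<forall>i\<in>insert a I. (v(a := 0)) i = 0" by (rule insert.prems(2)[rotated])
    then show "\<forall>i\<in>I. v i = 0" using insert.hyps(2) by (auto split: if_splits)
  qed (use insert.prems(1) in blast)
  have "S a \<inter> subspace_sum I S \<subseteq> {0}"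
  proof
    fix x assume x: "x \<in> S a \<inter> subspace_sum I S"
    then obtain v where v: "x = (\<Sum>i\<in>I. v i)" "\<forall>i\<in>I. v i \<in> S i" by (auto simp: subspace_sum_def)
    have "(\<Sum>i\<in>insert a I. (v(a := - x)) i) = 0"
      using insert.hyps(1,2) v(1) by (simp add: upd fun_upd_same del: fun_upd_apply)
    moreover have "\<forall>i\<in>insert a I. (v(a := - x)) i \<in> S i"
      using v(2) x cvs.subspace_neg[OF sub_a] by simp
    ultimately have "\<forall>i\<in>insert a I. (v(a := - x)) i = 0" by (rule insert.prems(2)[rotated])
    then have "- x = 0" by (metis fun_upd_same insertI1)
    then show "x \<in> {0}" by simp
  qed
  then have "cdim (subspace_sum (insert a I) S) = cdim (S a) + cdim (subspace_sum I S)"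
    unfolding subspace_sum_insert[OF insert.hyps(2,1)]
    by (rule cdim_sums_direct[OF sub_a subspace_subspace_sum[OF insert.hyps(1)], rotated])
      (use insert.prems(1) in blast)
  then show ?case using dim_I insert.hyps by simp
qed

locale sl2_action =
  fixes A E F :: "('n::finite \<Rightarrow> complex) \<Rightarrow> ('n \<Rightarrow> complex)"
  assumes clinear_A: "clinear A" and clinear_E: "clinear E" and clinear_F: "clinear F"
    and A_E: "\<And>x. A (E x) = E (A x) + cscale 2 (E x)"
    and A_F: "\<And>x. A (F x) = F (A x) - cscale 2 (F x)"
    and E_F: "\<And>x. E (F x) - F (E x) = A x"
begin

definition shift :: "complex \<Rightarrow> ('n \<Rightarrow> complex) \<Rightarrow> ('n \<Rightarrow> complex)" where
  "shift c x = A x - cscale c x"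

definition gen_eigenspace :: "complex \<Rightarrow> nat \<Rightarrow> ('n \<Rightarrow> complex) set" where
  "gen_eigenspace c m = {x. (shift c ^^ m) x = 0}"

lemma shift_0: "shift 0 x = A x"
  by (simp add: shift_def)

lemma clinear_shift: "clinear (shift c)"
  using clinear_A
  by (intro clinearI) (simp_all add: shift_def cvs2.linear_add cvs2.linear_scale algebra_simps)

lemma clinear_shift_pow: "clinear (shift c ^^ m)"
  by (rule clinear_funpow[OF clinear_shift])

lemma subspace_gen_eigenspace: "csubspace (gen_eigenspace c m)"
  unfolding gen_eigenspace_def by (rule clinear_kernel_subspace[OF clinear_shift_pow])

lemma shift_commute: "shift c (shift d x) = shift d (shift c x)"
  using clinear_A by (simp add: shift_def cvs2.linear_diff cvs2.linear_scale mult.commute)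

lemma shift_pow_commute: "(shift c ^^ m) ((shift d ^^ k) x) = (shift d ^^ k) ((shift c ^^ m) x)"
proof -
  have "(shift c ^^ m) (shift d y) = shift d ((shift c ^^ m) y)" for y
    by (induct m) (auto simp: shift_commute)
  then show ?thesis by (induct k) auto
qed

lemma shift_mem_gen_eigenspace: "x \<in> gen_eigenspace c m \<Longrightarrow> shift d x \<in> gen_eigenspace c m"
  using shift_pow_commute[where c=c and m=m and d=d and k=1] cvs2.linear_0[OF clinear_shift]
  by (simp add: gen_eigenspace_def)

lemma shift_pow_eigenvector:
  assumes "shift a x = 0"
  shows "(shift b ^^ k) x = cscale ((a - b) ^ k) x"
proof (induct k)
  case (Suc k)
  have "shift b x = cscale (a - b) x"
    using assms by (simp add: shift_def cscale_diff_left)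
  then have "shift b (cscale ((a - b) ^ k) x) = cscale ((a - b) ^ Suc k) x"
    using cvs2.linear_scale[OF clinear_shift] by (simp add: mult.commute)
  then show ?case using Suc by simp
qed simp

lemma eigenvector_in_gen_eigenspace_eq_0:
  assumes "a \<noteq> b" "x \<in> gen_eigenspace b m" "shift a x = 0"
  shows "x = 0"
proof -
  have "cscale ((a - b) ^ m) x = 0"
    using shift_pow_eigenvector[OF assms(3), where b=b and k=m] assms(2)
    by (simp add: gen_eigenspace_def)
  then show ?thesis using assms(1) by simp
qed

lemma gen_eigenspace_disjoint:
  assumes "a \<noteq> b" "x \<in> gen_eigenspace b m" "(shift a ^^ k) x = 0"
  shows "x = 0"
  using assms(2,3)
proof (induct k arbitrary: x)
  case (Suc k)
  have "(shift a ^^ k) (shift a x) = 0" using Suc(3) by (simp add: funpow_swap1)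
  then have "shift a x = 0" using Suc(1) shift_mem_gen_eigenspace[OF Suc(2)] by blast
  then show ?case using eigenvector_in_gen_eigenspace_eq_0[OF assms(1) Suc(2)] by blast
qed simp

lemma gen_eigenspaces_independent:
  assumes "finite I" "inj_on lam I" "\<forall>i\<in>I. v i \<in> gen_eigenspace (lam i) m" "(\<Sum>i\<in>I. v i) = 0"
  shows "\<forall>i\<in>I. v i = 0"
  using assms
proof (induct I arbitrary: v rule: finite_induct)
  case (insert a I)
  define T where "T = shift (lam a) ^^ m"
  have T: "clinear T" unfolding T_def by (rule clinear_shift_pow)
  have "T (v a) = 0" using insert.prems(2) by (simp add: gen_eigenspace_def T_def)
  then have "(\<Sum>i\<in>I. T (v i)) = 0"
    using insert.prems(3) insert.hyps cvs2.linear_0[OF T] cvs2.linear_add[OF T]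
      cvs2.linear_sum[OF T]
    by (metis add_0 sum.insert)
  moreover have "\<forall>i\<in>I. T (v i) \<in> gen_eigenspace (lam i) m"
    using insert.prems(2) shift_pow_commute[where d="lam a" and k=m] cvs2.linear_0[OF T]
    by (simp add: gen_eigenspace_def T_def)
  ultimately have "\<forall>i\<in>I. T (v i) = 0"
    using insert.hyps(3)[of "\<lambda>i. T (v i)"] insert.prems(1) by (simp add: inj_on_insert)
  then have zero_I: "\<forall>i\<in>I. v i = 0"
    using insert.prems(1,2) insert.hyps(2) gen_eigenspace_disjoint[of "lam a" "lam _" _ m m]
    by (fastforce simp: T_def)
  then show ?case using insert.prems(3) insert.hyps by simp
qed simp

lemma cdim_sum_gen_eigenspaces:
  assumes "finite I" "inj_on lam I" "\<And>i. i \<in> I \<Longrightarrow> csubspace (S i)"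
    "\<And>i. i \<in> I \<Longrightarrow> S i \<subseteq> gen_eigenspace (lam i) m"
  shows "cdim (subspace_sum I S) = (\<Sum>i\<in>I. cdim (S i))"
  using assms gen_eigenspaces_independent[OF assms(1,2)] by (intro cdim_subspace_sum_direct) blast+

text \<open>The vectors \<open>T\<^sup>j x\<close>, \<open>j \<le> card UNIV\<close>, lie in pairwise different generalised eigenspaces;
  if none of them vanished they would span a subspace of too large a dimension.\<close>
lemma nilpotent_on_gen_eigenspace:
  assumes T: "clinear T" and raise: "\<And>c x. x \<in> gen_eigenspace c m \<Longrightarrow> T x \<in> gen_eigenspace (c + d) m"
    and "d \<noteq> 0" and x: "x \<in> gen_eigenspace c m"
  shows "(T ^^ card (UNIV :: 'n set)) x = 0"
proof (rule ccontr)
  define N where "N = card (UNIV :: 'n set)"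
  assume "(T ^^ card (UNIV :: 'n set)) x \<noteq> 0"
  then have nonzero: "(T ^^ j) x \<noteq> 0" if "j \<le> N" for j
    using that cvs2.linear_0[OF clinear_funpow[OF T, of "N - j"]]
    by (metis N_def funpow_add le_add_diff_inverse2 comp_apply)
  have mem: "(T ^^ j) x \<in> gen_eigenspace (c + of_nat j * d) m" for j
  proof (induct j)
    case (Suc j)
    then show ?case using raise[OF Suc] by (simp add: algebra_simps)
  qed (simp add: x)
  define S where "S j = cspan {(T ^^ j) x}" for j
  have "cdim (subspace_sum {0..N} S) = (\<Sum>j\<in>{0..N}. cdim (S j))"
  proof (rule cdim_sum_gen_eigenspaces)
    show "inj_on (\<lambda>j. c + of_nat j * d) {0..N}" using \<open>d \<noteq> 0\<close> by (auto simp: inj_on_def)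
    show "S j \<subseteq> gen_eigenspace (c + of_nat j * d) m" for j
      unfolding S_def by (rule cvs.span_minimal) (use mem subspace_gen_eigenspace in auto)
  qed (simp_all add: S_def cvs.subspace_span)
  also have "\<dots> = N + 1"
    using nonzero by (simp add: S_def)
  finally have "cdim (subspace_sum {0..N} S) = N + 1" .
  moreover have "cdim (subspace_sum {0..N} S) \<le> N"
    using cvs.dim_subset[of "subspace_sum {0..N} S" UNIV]
    by (simp add: N_def card_image[OF inj_basisv])
  ultimately show False by simp
qed

lemma shift_E: "shift (c + 2) (E x) = E (shift c x)"
  by (simp add: shift_def A_E cvs2.linear_diff[OF clinear_E] cvs2.linear_scale[OF clinear_E]
      algebra_simps)

lemma shift_F: "shift (c - 2) (F x) = F (shift c x)"
  by (simp add: shift_def A_F cvs2.linear_diff[OF clinear_F] cvs2.linear_scale[OF clinear_F]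
      algebra_simps)

lemma E_mem_gen_eigenspace: "x \<in> gen_eigenspace c m \<Longrightarrow> E x \<in> gen_eigenspace (c + 2) m"
proof -
  have "(shift (c + 2) ^^ m) (E x) = E ((shift c ^^ m) x)"
    by (induct m) (simp_all add: shift_E)
  then show "x \<in> gen_eigenspace c m \<Longrightarrow> E x \<in> gen_eigenspace (c + 2) m"
    by (simp add: gen_eigenspace_def cvs2.linear_0[OF clinear_E])
qed

lemma F_mem_gen_eigenspace: "x \<in> gen_eigenspace c m \<Longrightarrow> F x \<in> gen_eigenspace (c + - 2) m"
proof -
  have "(shift (c - 2) ^^ m) (F x) = F ((shift c ^^ m) x)"
    by (induct m) (simp_all add: shift_F)
  then show "x \<in> gen_eigenspace c m \<Longrightarrow> F x \<in> gen_eigenspace (c + - 2) m"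
    by (simp add: gen_eigenspace_def cvs2.linear_0[OF clinear_F])
qed

lemma E_nilpotent: "x \<in> gen_eigenspace c m \<Longrightarrow> (E ^^ card (UNIV :: 'n set)) x = 0"
  by (rule nilpotent_on_gen_eigenspace[OF clinear_E E_mem_gen_eigenspace]) auto

lemma F_nilpotent: "x \<in> gen_eigenspace c m \<Longrightarrow> (F ^^ card (UNIV :: 'n set)) x = 0"
  by (rule nilpotent_on_gen_eigenspace[OF clinear_F F_mem_gen_eigenspace]) auto

lemma E_pow_mem_gen_eigenspace:
  "x \<in> gen_eigenspace c m \<Longrightarrow> (E ^^ j) x \<in> gen_eigenspace (c + 2 * of_nat j) m"
proof (induct j)
  case (Suc j)
  then show ?case using E_mem_gen_eigenspace[OF Suc(1)] by (simp add: algebra_simps)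
qed simp

fun A_ffact :: "nat \<Rightarrow> ('n \<Rightarrow> complex) \<Rightarrow> ('n \<Rightarrow> complex)" where
  "A_ffact 0 x = x"
| "A_ffact (Suc k) x = shift (of_nat k) (A_ffact k x)"

lemma A_ffact_shift_commute: "A_ffact k (shift c x) = shift c (A_ffact k x)"
  by (induct k) (auto simp: shift_commute)

lemma A_ffact_mem_gen_eigenspace: "x \<in> gen_eigenspace c m \<Longrightarrow> A_ffact k x \<in> gen_eigenspace c m"
  by (induct k) (auto simp: shift_mem_gen_eigenspace)

lemma A_ffact_eigenvector:
  assumes "shift c x = 0"
  shows "A_ffact k x = cscale (\<Prod>i<k. (c - of_nat i)) x"
proof (induct k)
  case (Suc k)
  have "shift (of_nat k) x = cscale (c - of_nat k) x"
    using assms by (simp add: shift_def cscale_diff_left)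
  then have "shift (of_nat k) (A_ffact k x) = cscale ((\<Prod>i<k. (c - of_nat i)) * (c - of_nat k)) x"
    using Suc by (simp add: cvs2.linear_scale[OF clinear_shift])
  then show ?case by simp
qed simp

lemma shift_F_pow: "shift c ((F ^^ k) x) = (F ^^ k) (shift (c + 2 * of_nat k) x)"
proof (induct k arbitrary: c)
  case (Suc k)
  have "shift c ((F ^^ Suc k) x) = F (shift (c + 2) ((F ^^ k) x))"
    using shift_F[of "c + 2"] by simp
  then show ?case using Suc by (simp add: algebra_simps)
qed simp

lemma E_F_pow_Suc:
  assumes "E x = 0"
  shows "E ((F ^^ Suc k) x) = cscale (of_nat (Suc k)) ((F ^^ k) (shift (of_nat k) x))"
proof (induct k)
  case 0
  show ?case using E_F[of x] assms cvs2.linear_0[OF clinear_F] by (simp add: shift_0)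
next
  case (Suc k)
  define y where "y = (F ^^ Suc k) x"
  have F_pow: "clinear (F ^^ Suc k)" by (rule clinear_funpow[OF clinear_F])
  have "E ((F ^^ Suc (Suc k)) x) = F (E y) + A y"
    using E_F[of y] by (simp add: y_def algebra_simps)
  also have "\<dots> = (F ^^ Suc k) (cscale (of_nat (Suc k)) (shift (of_nat k) x))
      + (F ^^ Suc k) (shift (2 * of_nat (Suc k)) x)"
    using Suc shift_F_pow[of 0 "Suc k" x] cvs2.linear_scale[OF clinear_F]
      cvs2.linear_scale[OF clinear_funpow[OF clinear_F]]
    by (simp add: y_def shift_0)
  also have "\<dots> = (F ^^ Suc k)
      (cscale (of_nat (Suc k)) (shift (of_nat k) x) + shift (2 * of_nat (Suc k)) x)"
    by (rule cvs2.linear_add[OF F_pow, symmetric])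
  also have "cscale (of_nat (Suc k)) (shift (of_nat k) x) + shift (2 * of_nat (Suc k)) x
      = cscale (of_nat (Suc (Suc k))) (shift (of_nat (Suc k)) x)"
    by (simp add: shift_def fun_eq_iff cscale_def plus_fun_apply minus_apply algebra_simps)
  finally show ?case
    by (simp add: cvs2.linear_scale[OF F_pow] del: funpow.simps)
qed

lemma E_pow_F_pow:
  assumes "E x = 0"
  shows "(E ^^ k) ((F ^^ k) x) = cscale (fact k) (A_ffact k x)"
  using assms
proof (induct k arbitrary: x)
  case (Suc k)
  have "E (shift (of_nat k) x) = 0"
    using shift_E[of "of_nat k" x] Suc(2) cvs2.linear_0[OF clinear_shift] by simp
  have "(E ^^ Suc k) ((F ^^ Suc k) x) = (E ^^ k) (E ((F ^^ Suc k) x))"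
    by (simp only: funpow_Suc_right comp_apply)
  also have "\<dots> = cscale (of_nat (Suc k)) ((E ^^ k) ((F ^^ k) (shift (of_nat k) x)))"
    using E_F_pow_Suc[OF Suc(2)] cvs2.linear_scale[OF clinear_funpow[OF clinear_E]] by simp
  also have "\<dots> = cscale (of_nat (Suc k)) (cscale (fact k) (A_ffact k (shift (of_nat k) x)))"
    using Suc(1)[OF \<open>E (shift (of_nat k) x) = 0\<close>] by simp
  also have "\<dots> = cscale (fact (Suc k)) (A_ffact (Suc k) x)"
    by (simp add: A_ffact_shift_commute algebra_simps)
  finally show ?case .
qed simp

lemma A_ffact_inj_on_gen_eigenspace:
  assumes "\<forall>i<k. c \<noteq> of_nat i" "x \<in> gen_eigenspace c m" "A_ffact k x = 0"
  shows "x = 0"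
  using assms
proof (induct k arbitrary: x)
  case (Suc k)
  have "shift (of_nat k) (A_ffact k x) = 0" using Suc(4) by simp
  moreover have "of_nat k \<noteq> c" using Suc(2) by auto
  ultimately have "A_ffact k x = 0"
    using eigenvector_in_gen_eigenspace_eq_0 A_ffact_mem_gen_eigenspace[OF Suc(3)] by blast
  then show ?case using Suc(1) Suc(2,3) by simp
qed simp

lemma A_ffact_eq_0_imp_eigenvector:
  assumes "x \<in> gen_eigenspace \<mu> m" "A_ffact k x = 0"
  shows "shift \<mu> x = 0"
  using assms
proof (induct k arbitrary: x)
  case 0 then show ?case using cvs2.linear_0[OF clinear_shift] by simp
next
  case (Suc k)
  have k: "shift (of_nat k) (A_ffact k x) = 0" using Suc(3) by simp
  show ?case
  proof (cases "\<mu> = of_nat k")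
    case False
    then have "A_ffact k x = 0"
      using eigenvector_in_gen_eigenspace_eq_0[OF _ A_ffact_mem_gen_eigenspace[OF Suc(2)] k] by simp
    then show ?thesis using Suc(1)[OF Suc(2)] by blast
  next
    case True
    then have "A_ffact k (shift \<mu> x) = 0" using k by (simp add: A_ffact_shift_commute)
    moreover have "\<forall>i<k. \<mu> \<noteq> of_nat i" using True by simp
    ultimately show ?thesis
      using A_ffact_inj_on_gen_eigenspace shift_mem_gen_eigenspace[OF Suc(2)] by blast
  qed
qed

text \<open>Since \<open>F\<close> is nilpotent, \<open>0 = E\<^sup>N F\<^sup>N x = N! A (A - 1) \<dots> (A - N + 1) x\<close>.\<close>
lemma highest_weight_vector_eigenvector:
  assumes "E x = 0" "x \<in> gen_eigenspace \<mu> m"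
  shows "shift \<mu> x = 0"
proof -
  define N where "N = card (UNIV :: 'n set)"
  have "(E ^^ N) ((F ^^ N) x) = 0"
    using F_nilpotent[OF assms(2)] cvs2.linear_0[OF clinear_funpow[OF clinear_E]]
    by (simp add: N_def)
  then have "A_ffact N x = 0" using E_pow_F_pow[OF assms(1)] by simp
  then show ?thesis using A_ffact_eq_0_imp_eigenvector[OF assms(2)] by blast
qed

definition highest_weight_space :: "nat \<Rightarrow> ('n \<Rightarrow> complex) set" where
  "highest_weight_space j = {x. E x = 0 \<and> shift (2 * of_nat j) x = 0}"

definition ker_A_E_pow :: "nat \<Rightarrow> ('n \<Rightarrow> complex) set" where
  "ker_A_E_pow j = {x. A x = 0 \<and> (E ^^ j) x = 0}"

definition ker_A2_E_pow :: "nat \<Rightarrow> ('n \<Rightarrow> complex) set" where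
  "ker_A2_E_pow j = {x. x \<in> gen_eigenspace 0 2 \<and> (E ^^ j) x = 0}"

lemma subspace_highest_weight_space: "csubspace (highest_weight_space j)"
proof -
  have "highest_weight_space j = {x. E x = 0} \<inter> {x. shift (2 * of_nat j) x = 0}"
    by (auto simp: highest_weight_space_def)
  then show ?thesis
    using clinear_kernel_subspace[OF clinear_E] clinear_kernel_subspace[OF clinear_shift]
      cvs.subspace_inter by metis
qed

lemma subspace_ker_A_E_pow: "csubspace (ker_A_E_pow j)"
proof -
  have "ker_A_E_pow j = {x. A x = 0} \<inter> {x. (E ^^ j) x = 0}" by (auto simp: ker_A_E_pow_def)
  then show ?thesis
    using clinear_kernel_subspace[OF clinear_A]
      clinear_kernel_subspace[OF clinear_funpow[OF clinear_E]]
      cvs.subspace_inter by metis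
qed

lemma subspace_ker_A2_E_pow: "csubspace (ker_A2_E_pow j)"
proof -
  have "ker_A2_E_pow j = gen_eigenspace 0 2 \<inter> {x. (E ^^ j) x = 0}" by (auto simp: ker_A2_E_pow_def)
  then show ?thesis
    using subspace_gen_eigenspace clinear_kernel_subspace[OF clinear_funpow[OF clinear_E]]
      cvs.subspace_inter by metis
qed

lemma ker_A2_E_pow_0: "ker_A2_E_pow 0 = {0}"
  using cvs.subspace_0[OF subspace_gen_eigenspace] by (auto simp: ker_A2_E_pow_def)

lemma ker_A_E_pow_subset: "ker_A_E_pow j \<subseteq> ker_A2_E_pow j"
  by (auto simp: ker_A_E_pow_def ker_A2_E_pow_def gen_eigenspace_def shift_0 numeral_2_eq_2
      cvs2.linear_0[OF clinear_A])

text \<open>\<open>E\<^sup>j\<close> maps \<open>ker_A2_E_pow (Suc j)\<close> into \<open>highest_weight_space j\<close>, with kernel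
  \<open>ker_A2_E_pow j\<close>.\<close>
lemma cdim_ker_A2_E_pow_Suc:
  "cdim (ker_A2_E_pow (Suc j)) \<le> cdim (ker_A2_E_pow j) + cdim (highest_weight_space j)"
proof -
  have "(E ^^ j) ` ker_A2_E_pow (Suc j) \<subseteq> highest_weight_space j"
  proof
    fix y assume "y \<in> (E ^^ j) ` ker_A2_E_pow (Suc j)"
    then obtain x where x: "x \<in> ker_A2_E_pow (Suc j)" "y = (E ^^ j) x" by auto
    have "E y = 0" using x by (simp add: ker_A2_E_pow_def)
    moreover have "y \<in> gen_eigenspace (2 * of_nat j) 2"
      using E_pow_mem_gen_eigenspace[of x 0 2 j] x by (simp add: ker_A2_E_pow_def)
    ultimately show "y \<in> highest_weight_space j"
      using highest_weight_vector_eigenvector by (simp add: highest_weight_space_def)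
  qed
  then have "cdim ((E ^^ j) ` ker_A2_E_pow (Suc j)) \<le> cdim (highest_weight_space j)"
    by (rule cvs.dim_subset)
  moreover have "ker_A2_E_pow (Suc j) \<inter> {x. (E ^^ j) x = 0} = ker_A2_E_pow j"
    using cvs2.linear_0[OF clinear_E] by (auto simp: ker_A2_E_pow_def)
  ultimately show ?thesis
    using cdim_le_cdim_kernel_plus_cdim_image[OF clinear_funpow[OF clinear_E] subspace_ker_A2_E_pow,
        of "Suc j" j]
    by simp
qed

lemma E_pow_F_pow_highest_weight_space:
  assumes "w \<in> highest_weight_space j"
  shows "(E ^^ j) ((F ^^ j) w) = cscale (fact j * (\<Prod>i<j. (2 * of_nat j - of_nat i))) w"
proof -
  have "E w = 0" "shift (2 * of_nat j) w = 0" using assms by (auto simp: highest_weight_space_def)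
  then show ?thesis using E_pow_F_pow A_ffact_eigenvector by simp
qed

lemma E_pow_F_pow_coefficient_nonzero: "fact j * (\<Prod>i<j. (2 * of_nat j - of_nat i :: complex)) \<noteq> 0"
proof -
  have "(2 * of_nat j - of_nat i :: complex) \<noteq> 0" if "i < j" for i
  proof
    assume "(2 * of_nat j - of_nat i :: complex) = 0"
    then have "(of_nat (2 * j) :: complex) = of_nat i" by simp
    then have "2 * j = i" using of_nat_eq_iff by blast
    then show False using that by simp
  qed
  then show ?thesis by (simp add: prod_zero_iff)
qed

lemma E_pow_F_pow_eq_0_imp_eq_0:
  assumes "w \<in> highest_weight_space j" "(E ^^ j) ((F ^^ j) w) = 0"
  shows "w = 0"
  using E_pow_F_pow_highest_weight_space[OF assms(1)] assms(2) E_pow_F_pow_coefficient_nonzero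
    by simp

lemma cdim_F_pow_highest_weight_space:
  "cdim ((F ^^ j) ` highest_weight_space j) = cdim (highest_weight_space j)"
proof (rule cvs2.dim_image_eq[OF clinear_funpow[OF clinear_F]], rule inj_onI)
  fix x y
  assume xy: "x \<in> cvs.span (highest_weight_space j)" "y \<in> cvs.span (highest_weight_space j)"
    "(F ^^ j) x = (F ^^ j) y"
  have "x - y \<in> highest_weight_space j"
    using xy(1,2) subspace_highest_weight_space cvs.subspace_diff cvs.span_eq_iff by metis
  moreover have "(E ^^ j) ((F ^^ j) (x - y)) = 0"
    using xy(3) cvs2.linear_diff[OF clinear_funpow[OF clinear_F]]
      cvs2.linear_0[OF clinear_funpow[OF clinear_E]]
    by simp
  ultimately have "x - y = 0" by (rule E_pow_F_pow_eq_0_imp_eq_0)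
  then show "x = y" by simp
qed

lemma F_pow_highest_weight_space_subset: "(F ^^ j) ` highest_weight_space j \<subseteq> ker_A_E_pow (Suc j)"
proof
  fix x assume "x \<in> (F ^^ j) ` highest_weight_space j"
  then obtain w where w: "w \<in> highest_weight_space j" "x = (F ^^ j) w" by auto
  have "A x = (F ^^ j) (shift (2 * of_nat j) w)"
    using shift_F_pow[of 0 j w] w(2) by (simp add: shift_0)
  then have "A x = 0"
    using w(1) cvs2.linear_0[OF clinear_funpow[OF clinear_F]]
    by (simp add: highest_weight_space_def)
  moreover have "(E ^^ Suc j) x = 0"
    using E_pow_F_pow_highest_weight_space[OF w(1)] w cvs2.linear_scale[OF clinear_E]
    by (simp add: highest_weight_space_def)
  ultimately show "x \<in> ker_A_E_pow (Suc j)" by (simp add: ker_A_E_pow_def)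
qed

lemma cdim_ker_A_E_pow_Suc:
  "cdim (ker_A_E_pow j) + cdim (highest_weight_space j) \<le> cdim (ker_A_E_pow (Suc j))"
proof -
  define T where "T = (F ^^ j) ` highest_weight_space j"
  have "ker_A_E_pow j \<inter> T \<subseteq> {0}"
  proof
    fix x assume x: "x \<in> ker_A_E_pow j \<inter> T"
    then obtain w where w: "w \<in> highest_weight_space j" "x = (F ^^ j) w" by (auto simp: T_def)
    then have "w = 0" using E_pow_F_pow_eq_0_imp_eq_0 x by (simp add: ker_A_E_pow_def)
    then show "x \<in> {0}" using w cvs2.linear_0[OF clinear_funpow[OF clinear_F]] by simp
  qed
  then have "cdim {x + y |x y. x \<in> ker_A_E_pow j \<and> y \<in> T}
      = cdim (ker_A_E_pow j) + cdim (highest_weight_space j)"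
    using cdim_sums_direct[OF subspace_ker_A_E_pow
        clinear_image_subspace[OF clinear_funpow[OF clinear_F] subspace_highest_weight_space]]
      cdim_F_pow_highest_weight_space
    by (simp add: T_def)
  moreover have "{x + y |x y. x \<in> ker_A_E_pow j \<and> y \<in> T} \<subseteq> ker_A_E_pow (Suc j)"
  proof -
    have "ker_A_E_pow j \<subseteq> ker_A_E_pow (Suc j)"
      using cvs2.linear_0[OF clinear_E] by (auto simp: ker_A_E_pow_def)
    then show ?thesis
      using F_pow_highest_weight_space_subset subspace_ker_A_E_pow[of "Suc j"] cvs.subspace_add
      unfolding T_def
        by blast
  qed
  then have "cdim {x + y |x y. x \<in> ker_A_E_pow j \<and> y \<in> T} \<le> cdim (ker_A_E_pow (Suc j))"
    by (rule cvs.dim_subset)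
  ultimately show ?thesis by simp
qed

lemma ker_A2_E_pow_eq: "ker_A2_E_pow j = ker_A_E_pow j"
proof -
  have "cdim (ker_A2_E_pow j) \<le> cdim (ker_A_E_pow j)"
  proof (induct j)
    case 0 then show ?case by (simp add: ker_A2_E_pow_0)
  next
    case (Suc j)
    then show ?case using cdim_ker_A2_E_pow_Suc[of j] cdim_ker_A_E_pow_Suc[of j] by linarith
  qed
  then show ?thesis
    using cvs.subspace_dim_equal[OF subspace_ker_A_E_pow subspace_ker_A2_E_pow ker_A_E_pow_subset]
    by metis
qed

lemma ker_A_sq: "A (A x) = 0 \<Longrightarrow> A x = 0"
proof -
  assume "A (A x) = 0"
  then have x: "x \<in> gen_eigenspace 0 2" by (simp add: gen_eigenspace_def shift_0 numeral_2_eq_2)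
  then have "x \<in> ker_A2_E_pow (card (UNIV :: 'n set))"
    using E_nilpotent[OF x] by (simp add: ker_A2_E_pow_def)
  then show "A x = 0" by (simp add: ker_A2_E_pow_eq ker_A_E_pow_def)
qed

lemma cdim_ker_A_le_cdim_ker_E: "cdim {x. A x = 0} \<le> cdim {x. E x = 0}"
proof -
  define N where "N = card (UNIV :: 'n set)"
  have "{x. A x = 0} \<subseteq> ker_A2_E_pow N"
  proof
    fix x assume "x \<in> {x. A x = 0}"
    then have x: "x \<in> gen_eigenspace 0 2"
      by (simp add: gen_eigenspace_def shift_0 numeral_2_eq_2 cvs2.linear_0[OF clinear_A])
    then show "x \<in> ker_A2_E_pow N" using E_nilpotent[OF x] by (simp add: ker_A2_E_pow_def N_def)
  qed
  then have "cdim {x. A x = 0} \<le> cdim (ker_A2_E_pow N)" by (rule cvs.dim_subset)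
  also have "\<dots> \<le> (\<Sum>i<N. cdim (highest_weight_space i))"
  proof (induct N)
    case 0 then show ?case by (simp add: ker_A2_E_pow_0)
  next
    case (Suc N) then show ?case using cdim_ker_A2_E_pow_Suc[of N] by simp
  qed
  also have "\<dots> = cdim (subspace_sum {..<N} highest_weight_space)"
  proof (rule cdim_sum_gen_eigenspaces[symmetric, where lam="\<lambda>i. 2 * of_nat i" and m=1])
    show "inj_on (\<lambda>i. 2 * of_nat i :: complex) {..<N}" by (auto simp: inj_on_def)
    show "highest_weight_space i \<subseteq> gen_eigenspace (2 * of_nat i) 1" for i
      by (auto simp: highest_weight_space_def gen_eigenspace_def)
  qed (simp_all add: subspace_highest_weight_space)
  also have "\<dots> \<le> cdim {x. E x = 0}"
    by (intro cvs.dim_subset subspace_sum_subset[OF clinear_kernel_subspace[OF clinear_E]])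
      (auto simp: highest_weight_space_def)
  finally show ?thesis .
qed

end

locale group_invertible =
  fixes A :: "('n::finite \<Rightarrow> complex) \<Rightarrow> ('n \<Rightarrow> complex)"
  assumes clinear_A: "clinear A" and ker_A_sq: "\<And>x. A (A x) = 0 \<Longrightarrow> A x = 0"
begin

lemma kernel_range_decomposition: "\<exists>k z. y = k + A z \<and> A k = 0"
proof -
  define K where "K = {x. A x = 0}"
  define R where "R = range A"
  have sub_K: "csubspace K" unfolding K_def by (rule clinear_kernel_subspace[OF clinear_A])
  have sub_R: "csubspace R" unfolding R_def
    using clinear_image_subspace[OF clinear_A cvs.subspace_UNIV] .
  have "K \<inter> R \<subseteq> {0}" using ker_A_sq by (auto simp: K_def R_def)
  then have "cdim {x + y |x y. x \<in> K \<and> y \<in> R} = cdim K + cdim R"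
    by (rule cdim_sums_direct[OF sub_K sub_R])
  moreover have "cdim (UNIV :: ('n \<Rightarrow> complex) set) \<le> cdim K + cdim R"
    using cdim_le_cdim_kernel_plus_cdim_image[OF clinear_A cvs.subspace_UNIV]
    by (simp add: K_def R_def)
  ultimately have "{x + y |x y. x \<in> K \<and> y \<in> R} = UNIV"
    using cvs.subspace_dim_equal[OF cvs.subspace_sums[OF sub_K sub_R] cvs.subspace_UNIV] by simp
  then show ?thesis unfolding K_def R_def by blast
qed

lemma group_inverse_ex1: "\<exists>!v. v \<in> range A \<and> A (y - A v) = 0"
proof (rule ex_ex1I)
  obtain k z where kz: "y = k + A z" "A k = 0"
    using kernel_range_decomposition by blast
  obtain k' z' where kz': "z = k' + A z'" "A k' = 0"
    using kernel_range_decomposition by blast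
  have "A z = A (A z')" using kz' cvs2.linear_add[OF clinear_A] by simp
  then show "\<exists>v. v \<in> range A \<and> A (y - A v) = 0"
    using kz
    by (intro exI[of _ "A z'"])
        (simp add: cvs2.linear_diff[OF clinear_A] cvs2.linear_add[OF clinear_A])
next
  fix v v' assume v: "v \<in> range A \<and> A (y - A v) = 0" and v': "v' \<in> range A \<and> A (y - A v') = 0"
  then obtain a b where ab: "v = A a" "v' = A b" by blast
  have "A (A v - A v') = 0"
    using v v' cvs2.linear_diff[OF clinear_A, of "y - A v'" "y - A v"] by simp
  then have "A (A (v - v')) = 0" by (simp add: cvs2.linear_diff[OF clinear_A])
  then have "A (v - v') = 0" by (rule ker_A_sq)
  then have "A (A (a - b)) = 0" using ab by (simp add: cvs2.linear_diff[OF clinear_A])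
  then have "A (a - b) = 0" by (rule ker_A_sq)
  then have "v - v' = 0" using ab by (simp add: cvs2.linear_diff[OF clinear_A])
  then show "v = v'" by simp
qed

text \<open>When \<open>ker A\<^sup>2 = ker A\<close>, the space is \<open>ker A \<oplus> range A\<close>; the group inverse sends \<open>y\<close> to the
  unique \<open>v \<in> range A\<close> with \<open>A v\<close> the \<open>range A\<close>-component of \<open>y\<close>.\<close>
definition G :: "('n \<Rightarrow> complex) \<Rightarrow> ('n \<Rightarrow> complex)" where
  "G y = (THE v. v \<in> range A \<and> A (y - A v) = 0)"

lemma G_eq_iff: "G y = v \<longleftrightarrow> v \<in> range A \<and> A (y - A v) = 0"
  using group_inverse_ex1[of y] theI'[OF group_inverse_ex1[of y]]
  unfolding G_def by blast

lemma G_in_range: "G y \<in> range A"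
  and A_diff_G: "A (y - A (G y)) = 0"
  using G_eq_iff by blast+

lemma clinear_G: "clinear G"
proof (rule clinearI)
  have range_add: "u \<in> range A \<Longrightarrow> w \<in> range A \<Longrightarrow> u + w \<in> range A" for u w
    by (auto simp: cvs2.linear_add[OF clinear_A, symmetric])
  have range_scale: "u \<in> range A \<Longrightarrow> cscale c u \<in> range A" for u c
    by (auto simp: cvs2.linear_scale[OF clinear_A, symmetric])
  show "G (x + y) = G x + G y" for x y
    unfolding G_eq_iff
    using G_in_range range_add A_diff_G[of x] A_diff_G[of y]
    by (simp add: cvs2.linear_add[OF clinear_A] cvs2.linear_diff[OF clinear_A] algebra_simps)
  show "G (cscale c x) = cscale c (G x)" for c x
  proof -
    have "A (cscale c x - A (cscale c (G x))) = cscale c (A (x - A (G x)))"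
      by (simp add: cvs2.linear_scale[OF clinear_A] cvs2.linear_diff[OF clinear_A])
    then show ?thesis
      unfolding G_eq_iff using G_in_range range_scale A_diff_G[of x]
      by simp
  qed
qed

lemma A_G_A: "A (G (A x)) = A x"
proof -
  have "A (A (x - G (A x))) = 0"
    using A_diff_G[of "A x"] by (simp add: cvs2.linear_diff[OF clinear_A])
  then have "A (x - G (A x)) = 0" by (rule ker_A_sq)
  then show ?thesis by (simp add: cvs2.linear_diff[OF clinear_A])
qed

lemma G_A_G: "G (A (G x)) = G x"
  unfolding G_eq_iff using G_in_range by (simp add: cvs2.linear_0[OF clinear_A])

lemma A_G: "A (G x) = G (A x)"
proof -
  have "A (A x - A (A (G x))) = 0"
    using A_diff_G[of x] by (simp add: cvs2.linear_diff[OF clinear_A] cvs2.linear_0[OF clinear_A])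
  then show ?thesis unfolding eq_commute[of "A _"] G_eq_iff by simp
qed

end

lemma lie_algebra_clinear_right: "lie_algebra br \<Longrightarrow> clinear (br x)"
  by (intro clinearI) (simp_all add: lie_algebra_def)

lemma lie_algebra_clinear_left: "lie_algebra br \<Longrightarrow> clinear (\<lambda>x. br x y)"
  by (intro clinearI) (simp_all add: lie_algebra_def)

lemma lie_algebra_antisym:
  assumes "lie_algebra br"
  shows "br x y = - br y x"
proof -
  have "br (x + y) (x + y) = br x x + br x y + (br y x + br y y)"
    using assms unfolding lie_algebra_def by metis
  moreover have "br (x + y) (x + y) = 0" "br x x = 0" "br y y = 0"
    using assms unfolding lie_algebra_def by blast+
  ultimately have "br x y + br y x = 0" by simp
  then show ?thesis by (simp add: eq_neg_iff_add_eq_0)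
qed

lemma lie_algebra_jacobi:
  assumes L: "lie_algebra br"
  shows "br x (br y z) = br (br x y) z + br y (br x z)"
proof -
  have "br x (br y z) + br y (br z x) + br z (br x y) = 0" using L by (simp add: lie_algebra_def)
  moreover have "br y (br z x) = - br y (br x z)"
    using lie_algebra_antisym[OF L, of z x] cvs2.linear_neg[OF lie_algebra_clinear_right[OF L]]
    by simp
  moreover have "br z (br x y) = - br (br x y) z" by (rule lie_algebra_antisym[OF L])
  ultimately show ?thesis by (simp add: algebra_simps)
qed

lemma sl2_action_ad:
  assumes L: "lie_algebra br" and T: "sl2_triple br e h f"
  shows "sl2_action (br h) (br e) (br f)"
proof (rule sl2_action.intro)
  show "clinear (br h)" "clinear (br e)" "clinear (br f)"
    using lie_algebra_clinear_right[OF L] by auto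
  have he: "br h e = cscale 2 e" and hf: "br h f = cscale (-2) f" and ef: "br e f = h"
    using T by (auto simp: sl2_triple_def)
  have scale: "br (cscale c u) x = cscale c (br u x)" for c u x
    using L by (simp add: lie_algebra_def)
  fix x
  show "br h (br e x) = br e (br h x) + cscale 2 (br e x)"
    using lie_algebra_jacobi[OF L, of h e x] by (simp add: he scale algebra_simps)
  have "br (br h f) x = cscale (-2) (br f x)" by (simp only: hf scale)
  also have "\<dots> = - cscale 2 (br f x)" by (simp add: cscale_def fun_eq_iff uminus_apply)
  finally have "br (br h f) x = - cscale 2 (br f x)" .
  then show "br h (br f x) = br f (br h x) - cscale 2 (br f x)"
    using lie_algebra_jacobi[OF L, of h f x] by (simp add: algebra_simps)
  show "br e (br f x) - br f (br e x) = br h x"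
    using lie_algebra_jacobi[OF L, of e f x] by (simp add: ef)
qed

lemma cartan_subalgebra_eq_ker_ad:
  fixes br :: "('n::finite \<Rightarrow> complex) \<Rightarrow> ('n \<Rightarrow> complex) \<Rightarrow> ('n \<Rightarrow> complex)"
  assumes L: "lie_algebra br" and H: "cartan_subalgebra br H"
    and T: "principal_sl2_triple br H e h f" and h: "h \<in> H"
  shows "H = {x. br h x = 0}"
proof -
  interpret sl2_action "br h" "br e" "br f"
    using sl2_action_ad[OF L] T by (simp add: principal_sl2_triple_def)
  have ker_pow: "(br h ^^ k) y = 0 \<Longrightarrow> br h y = 0" for k y
  proof (induct k arbitrary: y)
    case 0 then show ?case using cvs2.linear_0[OF clinear_A] by simp
  next
    case (Suc k)
    have "(br h ^^ k) (br h y) = 0" using Suc(2) by (simp only: funpow_Suc_right comp_apply)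
    then have "br h (br h y) = 0" by (rule Suc(1))
    then show ?case by (rule ker_A_sq)
  qed
  obtain k where k: "\<forall>xs y. set xs \<subseteq> H \<and> length xs = k \<and> y \<in> H \<longrightarrow> foldr br xs y = 0"
    using H by (auto simp: cartan_subalgebra_def nilpotent_sub_def)
  have "foldr br (replicate k h) y = (br h ^^ k) y" for y
    by (induct k) auto
  then have "(br h ^^ k) y = 0" if "y \<in> H" for y
    using k[rule_format, of "replicate k h" y] that h by (simp add: set_replicate_conv_if)
  then have "H \<subseteq> {x. br h x = 0}" using ker_pow by blast
  moreover have "cdim {x. br h x = 0} \<le> cdim H"
    using cdim_ker_A_le_cdim_ker_E T by (simp add: principal_sl2_triple_def centralizer_def)
  moreover have "csubspace H" using H by (simp add: cartan_subalgebra_def lie_subalgebra_def)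
  ultimately show ?thesis
    using cvs.subspace_dim_equal[OF _ clinear_kernel_subspace[OF clinear_A]] by blast
qed

type_synonym 'v mpoly = "('v \<Rightarrow>\<^sub>0 nat) \<Rightarrow>\<^sub>0 complex"

abbreviation lk where "lk \<equiv> Poly_Mapping.lookup"
abbreviation sg where "sg \<equiv> Poly_Mapping.single"
abbreviation ks where "ks \<equiv> Poly_Mapping.keys"

declare One_nat_def [simp del]

lemma lookup_minus_nat: "lk (f - g) k = lk f k - (lk g k :: nat)"
  by transfer simp

lemma poly_mapping_sum_single: "(P :: 'a \<Rightarrow>\<^sub>0 'b::comm_monoid_add) = (\<Sum>\<mu>\<in>ks P. sg \<mu> (lk P \<mu>))"
proof (rule poly_mapping_eqI)
  fix \<nu>
  have "lk (\<Sum>\<mu>\<in>ks P. sg \<mu> (lk P \<mu>)) \<nu> = (\<Sum>\<mu>\<in>ks P. (lk P \<mu> when \<mu> = \<nu>))"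
    by (simp add: lookup_sum lookup_single)
  also have "\<dots> = lk P \<nu>"
  proof (cases "\<nu> \<in> ks P")
    case True
    then show ?thesis by (simp add: when_def sum.delta)
  next
    case False
    then have "(\<Sum>\<mu>\<in>ks P. (lk P \<mu> when \<mu> = \<nu>)) = 0"
      by (intro sum.neutral) (auto simp: when_def)
    then show ?thesis using False by (simp add: in_keys_iff)
  qed
  finally show "lk P \<nu> = lk (\<Sum>\<mu>\<in>ks P. sg \<mu> (lk P \<mu>)) \<nu>" by simp
qed

lemma poly_mapping_induct_single_add [case_names single add]:
  fixes P :: "'a \<Rightarrow>\<^sub>0 'b::comm_monoid_add"
  assumes "\<And>\<mu> c. Q (sg \<mu> c)" "\<And>P R. Q P \<Longrightarrow> Q R \<Longrightarrow> Q (P + R)"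
  shows "Q P"
proof -
  have Q0: "Q 0" using assms(1)[of _ 0] by simp
  have "Q (\<Sum>\<mu>\<in>S. sg \<mu> (lk P \<mu>))" if "finite S" for S
    using that by (induct S rule: finite_induct) (auto simp: Q0 assms)
  then show ?thesis using poly_mapping_sum_single[of P] by (metis finite_keys)
qed

lemma update_eq_add: "a \<notin> ks f \<Longrightarrow> Poly_Mapping.update a b f = f + sg a (b :: 'b :: monoid_add)"
  by (rule poly_mapping_eqI)
    (auto simp: lookup_update lookup_add lookup_single when_def in_keys_iff)

abbreviation pvar :: "'v \<Rightarrow> 'v mpoly" where
  "pvar v \<equiv> sg (sg v 1) 1"

lemma single_single_Suc: "sg (sg v (Suc b)) (1::complex) = sg (sg v b) 1 * pvar v"
  by (simp add: mult_single single_add[symmetric] One_nat_def)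

lemma mpoly_induct [case_names const var add mult]:
  fixes P :: "'v mpoly"
  assumes const: "\<And>c. Q (sg 0 c)" and var: "\<And>v. Q (pvar v)"
    and add: "\<And>P R. Q P \<Longrightarrow> Q R \<Longrightarrow> Q (P + R)" and mult: "\<And>P R. Q P \<Longrightarrow> Q R \<Longrightarrow> Q (P * R)"
  shows "Q P"
proof -
  have pw: "Q (sg (sg v b) 1)" for v b
  proof (induct b)
    case 0 then show ?case using const[of 1] by simp
  next
    case (Suc b) then show ?case using var mult single_single_Suc by metis
  qed
  have mono: "Q (sg \<mu> 1)" for \<mu> :: "'v \<Rightarrow>\<^sub>0 nat"
  proof (induct \<mu> rule: update_induct)
    case const then show ?case using assms(1)[of 1] by simp
  next
    case (update f a b)
    have "sg (Poly_Mapping.update a b f) (1::complex) = sg f 1 * sg (sg a b) 1"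
      using update(1) by (simp add: update_eq_add mult_single)
    then show ?case using update(3) pw mult by metis
  qed
  show ?thesis
  proof (induct P rule: poly_mapping_induct_single_add)
    case (single \<mu> c)
    have "sg \<mu> c = sg 0 c * sg \<mu> (1::complex)" by (simp add: mult_single)
    then show ?case using mult const mono by metis
  next
    case (add P R) then show ?case using assms(3) by blast
  qed
qed

lemma monomial_diff_add_commute:
  fixes \<mu> \<nu> :: "'v \<Rightarrow>\<^sub>0 nat"
  assumes "lk \<mu> v \<ge> 1"
  shows "\<mu> - sg v 1 + \<nu> = \<mu> + \<nu> - sg v 1"
  using assms
    by (intro poly_mapping_eqI) (auto simp: lookup_add lookup_minus_nat lookup_single when_def)

lemma monomial_diff_add_cancel:
  fixes \<mu> :: "'v \<Rightarrow>\<^sub>0 nat"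
  assumes "lk \<mu> v \<ge> 1"
  shows "\<mu> - sg v 1 + sg v 1 = \<mu>"
  using assms
    by (intro poly_mapping_eqI) (auto simp: lookup_add lookup_minus_nat lookup_single when_def)

lemma pderiv_var_single: "pderiv_var v (sg \<mu> a) = sg (\<mu> - sg v 1) (of_nat (lk \<mu> v) * a)"
  by (cases "a = 0") (simp_all add: pderiv_var_def)

lemma lookup_pderiv_var:
  "lk (pderiv_var v P) \<nu> = of_nat (lk \<nu> v + 1) * lk P (\<nu> + sg v 1)"
proof -
  define e where "e = sg v (1::nat)"
  define \<mu>0 where "\<mu>0 = \<nu> + e"
  define c where "c \<mu> = of_nat (lk \<mu> v) * lk P \<mu>" for \<mu>
  have "lk (pderiv_var v P) \<nu> = (\<Sum>\<mu>\<in>ks P. (c \<mu> when \<mu> - e = \<nu>))"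
    by (simp add: pderiv_var_def lookup_sum lookup_single c_def e_def)
  also have "\<dots> = (\<Sum>\<mu>\<in>ks P. (if \<mu> = \<mu>0 then c \<mu>0 else 0))"
  proof (intro sum.cong refl)
    fix \<mu> assume "\<mu> \<in> ks P"
    show "(c \<mu> when \<mu> - e = \<nu>) = (if \<mu> = \<mu>0 then c \<mu>0 else 0)"
    proof (cases "\<mu> = \<mu>0")
      case True then show ?thesis by (simp add: \<mu>0_def when_def)
    next
      case False
      show ?thesis
      proof (cases "\<mu> - e = \<nu>")
        case True
        have "lk \<mu> v = 0"
        proof (rule ccontr)
          assume "lk \<mu> v \<noteq> 0"
          then have "\<mu> - e + e = \<mu>"
            using monomial_diff_add_cancel[where \<mu>=\<mu> and v=v] by (simp add: e_def)
          then show False using True False by (simp add: \<mu>0_def)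
        qed
        then show ?thesis using False by (simp add: c_def when_def)
      next
        case False then show ?thesis using \<open>\<mu> \<noteq> \<mu>0\<close> by (simp add: when_def)
      qed
    qed
  qed
  also have "\<dots> = c \<mu>0"
    by (simp add: sum.delta c_def in_keys_iff)
  finally show ?thesis by (simp add: c_def \<mu>0_def e_def lookup_add)
qed

lemma pderiv_var_add: "pderiv_var v (P + Q) = pderiv_var v P + pderiv_var v Q"
  by (rule poly_mapping_eqI) (simp add: lookup_pderiv_var lookup_add algebra_simps)

lemma pderiv_var_zero [simp]: "pderiv_var v 0 = 0"
  by (simp add: pderiv_var_def)

lemma pderiv_var_sum: "pderiv_var v (sum f I) = (\<Sum>i\<in>I. pderiv_var v (f i))"
  by (induct I rule: infinite_finite_induct) (auto simp: pderiv_var_add)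

lemma pderiv_var_single_mult:
  "pderiv_var v (sg \<mu> a * sg \<nu> b) = pderiv_var v (sg \<mu> a) * sg \<nu> b + sg \<mu> a * pderiv_var v (sg \<nu> b)"
proof -
  define e where "e = sg v (1::nat)"
  have lhs: "pderiv_var v (sg \<mu> a * sg \<nu> b) = sg (\<mu> + \<nu> - e) (of_nat (lk \<mu> v + lk \<nu> v) * (a * b))"
    by (simp add: mult_single pderiv_var_single lookup_add e_def)
  have rhs: "pderiv_var v (sg \<mu> a) * sg \<nu> b + sg \<mu> a * pderiv_var v (sg \<nu> b)
      = sg (\<mu> - e + \<nu>) (of_nat (lk \<mu> v) * (a * b)) + sg (\<nu> - e + \<mu>) (of_nat (lk \<nu> v) * (a * b))"
    by (simp add: mult_single pderiv_var_single e_def algebra_simps)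
  have t1: "sg (\<mu> - e + \<nu>) (of_nat (lk \<mu> v) * (a * b)) = sg (\<mu> + \<nu> - e) (of_nat (lk \<mu> v) * (a * b))"
  proof (cases "lk \<mu> v = 0")
    case False
    then have "\<mu> - e + \<nu> = \<mu> + \<nu> - e"
      using monomial_diff_add_commute[where \<mu>=\<mu> and v=v and \<nu>=\<nu>] by (simp add: e_def)
    then show ?thesis by simp
  qed simp
  have t2: "sg (\<nu> - e + \<mu>) (of_nat (lk \<nu> v) * (a * b)) = sg (\<mu> + \<nu> - e) (of_nat (lk \<nu> v) * (a * b))"
  proof (cases "lk \<nu> v = 0")
    case False
    then have "\<nu> - e + \<mu> = \<mu> + \<nu> - e"
      using monomial_diff_add_commute[where \<mu>=\<nu> and v=v and \<nu>=\<mu>] by (simp add: e_def add.commute)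
    then show ?thesis by simp
  qed simp
  show ?thesis unfolding lhs rhs t1 t2 by (simp add: single_add[symmetric] algebra_simps)
qed

lemma pderiv_var_mult: "pderiv_var v (P * Q) = pderiv_var v P * Q + P * pderiv_var v Q"
proof (induct P rule: poly_mapping_induct_single_add)
  case (single \<mu> a)
  show ?case
  proof (induct Q rule: poly_mapping_induct_single_add)
    case (single \<nu> b) then show ?case by (rule pderiv_var_single_mult)
  next
    case (add Q R) then show ?case by (simp add: distrib_left pderiv_var_add algebra_simps)
  qed
next
  case (add P R) then show ?case by (simp add: distrib_right pderiv_var_add algebra_simps)
qed


lemma vars_finite: "finite (vars P)"
  by (simp add: vars_def)

lemma in_vars: "v \<in> vars P \<longleftrightarrow> (\<exists>\<mu>\<in>ks P. v \<in> ks \<mu>)"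
  by (auto simp: vars_def)

lemma pderiv_var_not_in_vars: "v \<notin> vars P \<Longrightarrow> pderiv_var v P = 0"
  unfolding pderiv_var_def by (intro sum.neutral) (auto simp: in_vars in_keys_iff)

lemma keys_add_nat: "ks (\<mu> + \<nu>) = ks \<mu> \<union> ks (\<nu> :: 'v \<Rightarrow>\<^sub>0 nat)"
  by (auto simp: in_keys_iff lookup_add)

lemma vars_add: "vars (P + Q) \<subseteq> vars P \<union> vars Q"
  using keys_add[of P Q] by (auto simp: vars_def)

lemma vars_mult: "vars (P * Q) \<subseteq> vars P \<union> vars Q"
proof
  fix v assume "v \<in> vars (P * Q)"
  then obtain \<mu> where "\<mu> \<in> ks (P * Q)" "v \<in> ks \<mu>" by (auto simp: vars_def)
  then obtain a b where "a \<in> ks P" "b \<in> ks Q" "\<mu> = a + b" using keys_mult[of P Q] by blast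
  then show "v \<in> vars P \<union> vars Q" using \<open>v \<in> ks \<mu>\<close> by (auto simp: vars_def keys_add_nat)
qed

lemma vars_const [simp]: "vars (sg 0 c) = {}"
  by (simp add: vars_def)

lemma vars_var [simp]: "vars (pvar v) = {v}"
  by (simp add: vars_def)

lemma vars_zero [simp]: "vars 0 = {}"
  by (simp add: vars_def)

lemma pderiv_var_const [simp]: "pderiv_var v (sg 0 c) = 0"
  by (simp add: pderiv_var_single)

lemma pderiv_var_pvar: "pderiv_var a (pvar v) = (if a = v then 1 else 0)"
  by (auto simp: pderiv_var_single lookup_single when_def)

lemma pderiv_var_smult: "pderiv_var a (sg 0 c * P) = sg 0 c * pderiv_var a P"
  by (simp add: pderiv_var_mult)

definition derivation :: "(('n \<times> nat) \<Rightarrow> 'n Spoly) \<Rightarrow> 'n Spoly \<Rightarrow> 'n Spoly" where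
  "derivation M P = (\<Sum>v\<in>vars P. pderiv_var v P * M v)"

lemma derivation_eq: "finite S \<Longrightarrow> vars P \<subseteq> S \<Longrightarrow> derivation M P = (\<Sum>v\<in>S. pderiv_var v P * M v)"
  unfolding derivation_def by (rule sum.mono_neutral_left) (auto simp: pderiv_var_not_in_vars)

lemma derivation_add: "derivation M (P + Q) = derivation M P + derivation M Q"
proof -
  define S where "S = vars P \<union> vars Q"
  have f: "finite S" by (simp add: S_def vars_finite)
  have "derivation M (P + Q) = (\<Sum>v\<in>S. pderiv_var v (P + Q) * M v)"
    using vars_add[of P Q] by (intro derivation_eq f) (auto simp: S_def)
  also have "\<dots> = (\<Sum>v\<in>S. pderiv_var v P * M v) + (\<Sum>v\<in>S. pderiv_var v Q * M v)"
    by (simp add: pderiv_var_add distrib_right sum.distrib)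
  also have "\<dots> = derivation M P + derivation M Q"
    using f derivation_eq[of S P M] derivation_eq[of S Q M] by (simp add: S_def)
  finally show ?thesis .
qed

lemma derivation_zero [simp]: "derivation M 0 = 0"
  by (simp add: derivation_def)

lemma derivation_sum: "derivation M (sum f I) = (\<Sum>i\<in>I. derivation M (f i))"
  by (induct I rule: infinite_finite_induct) (auto simp: derivation_add)

lemma derivation_mult: "derivation M (P * Q) = derivation M P * Q + P * derivation M Q"
proof -
  define S where "S = vars P \<union> vars Q"
  have f: "finite S" by (simp add: S_def vars_finite)
  have "derivation M (P * Q) = (\<Sum>v\<in>S. pderiv_var v (P * Q) * M v)"
    using vars_mult[of P Q] by (intro derivation_eq f) (auto simp: S_def)
  also have "\<dots> = (\<Sum>v\<in>S. pderiv_var v P * M v) * Q + P * (\<Sum>v\<in>S. pderiv_var v Q * M v)"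
    by (simp add: pderiv_var_mult algebra_simps sum.distrib sum_distrib_left sum_distrib_right)
  also have "\<dots> = derivation M P * Q + P * derivation M Q"
    using f derivation_eq[of S P M] derivation_eq[of S Q M] by (simp add: S_def)
  finally show ?thesis .
qed

lemma derivation_const [simp]: "derivation M (sg 0 c) = 0"
  by (simp add: derivation_def)

lemma derivation_var [simp]: "derivation M (pvar v) = M v"
  by (simp add: derivation_def pderiv_var_pvar)

lemma derivation_smult: "derivation M (sg 0 c * P) = sg 0 c * derivation M P"
  by (simp add: derivation_mult)

lemma derivation_neg: "derivation M (- P) = - derivation M P"
  using derivation_add[of M P "- P"] by (simp add: eq_neg_iff_add_eq_0 add.commute)

lemma derivation_commutator:
  "derivation M (derivation N P) =
     derivation N (derivation M P) + derivation (\<lambda>v. derivation M (N v) - derivation N (M v)) P"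
proof (induct P rule: mpoly_induct)
  case (const c) then show ?case by simp
next
  case (var v) then show ?case by simp
next
  case (add P R) then show ?case by (simp add: derivation_add)
next
  case (mult P R)
  then show ?case by (simp add: derivation_mult derivation_add algebra_simps)
qed

lemma lookup_smult: "lk (sg 0 a * (P :: 'v mpoly)) \<mu> = a * lk P \<mu>"
proof (induct P rule: poly_mapping_induct_single_add)
  case (single \<nu> c) then show ?case by (simp add: mult_single lookup_single when_def)
next
  case (add P R) then show ?case by (simp add: distrib_left lookup_add)
qed

lemma smult_eq_0: "sg 0 a * (P :: 'v mpoly) = 0 \<Longrightarrow> a \<noteq> 0 \<Longrightarrow> P = 0"
proof (rule poly_mapping_eqI)
  fix \<mu> assume h: "sg 0 a * P = 0" "a \<noteq> 0"
  have "a * lk P \<mu> = 0" using lookup_smult[of a P \<mu>] h(1) by simp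
  then show "lk P \<mu> = lk 0 \<mu>" using h(2) by simp
qed

lemma smult_smult: "sg 0 a * (sg 0 b * (P :: 'v mpoly)) = sg 0 (a * b) * P"
  by (simp add: mult.assoc[symmetric] mult_single)

lemma smult_add_left: "sg 0 (a + b) * (P :: 'v mpoly) = sg 0 a * P + sg 0 b * P"
  by (simp add: single_add distrib_right)

lemma smult_diff_left: "sg 0 (a - b) * (P :: 'v mpoly) = sg 0 a * P - sg 0 b * P"
  by (simp add: single_diff left_diff_distrib)

lemma smult_neg1: "sg 0 (-1) * P = - (P :: 'v mpoly)"
  by (simp add: single_uminus)

lemma loopv_alt: "loopv x k = (\<Sum>i\<in>UNIV. sg 0 (x i) * pvar (i, k))"
  by (simp add: loopv_def mult_single)

lemma loopv_add: "loopv (x + y) k = loopv x k + loopv y k"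
  by (simp add: loopv_def plus_fun_apply single_add sum.distrib)

lemma loopv_smult: "loopv (cscale c x) k = sg 0 c * loopv x k"
  by (simp add: loopv_alt cscale_def sum_distrib_left smult_smult)

lemma loopv_zero [simp]: "loopv 0 k = 0"
  by (simp add: loopv_def zero_fun_apply)

lemma loopv_neg: "loopv (- x) k = - loopv x k"
  using loopv_add[of x "- x" k] by (simp add: eq_neg_iff_add_eq_0 add.commute)

lemma loopv_diff: "loopv (x - y) k = loopv x k - loopv y k"
  using loopv_add[of x "- y" k] loopv_neg[of y k] by simp

lemma loopv_sum: "loopv (sum f I) k = (\<Sum>i\<in>I. loopv (f i) k)"
  by (induct I rule: infinite_finite_induct) (auto simp: loopv_add)

lemma clinear_basisv_expansion:
  fixes T :: "('n::finite \<Rightarrow> complex) \<Rightarrow> ('n \<Rightarrow> complex)"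
  assumes "clinear T" shows "T x = (\<Sum>i\<in>UNIV. cscale (x i) (T (basisv i)))"
proof -
  have "T x = T (\<Sum>i\<in>UNIV. cscale (x i) (basisv i))"
    by (rule arg_cong[where f=T, OF basisv_expansion])
  then show ?thesis by (simp add: cvs2.linear_sum[OF assms] cvs2.linear_scale[OF assms])
qed

lemma loopv_basis: "loopv (basisv i) k = pvar (i, k)"
proof -
  have "loopv (basisv i) k = (\<Sum>j\<in>UNIV. (if j = i then pvar (i, k) else 0))"
    unfolding loopv_def by (intro sum.cong) (auto simp: basisv_def)
  then show ?thesis by simp
qed

lemma derivation_loopv: "derivation M (loopv x k) = (\<Sum>i\<in>UNIV. sg 0 (x i) * M (i, k))"
  by (simp add: loopv_alt derivation_sum derivation_smult)

definition var_image ::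
    "(('n::finite \<Rightarrow> complex) \<Rightarrow> ('n \<Rightarrow> complex)) \<Rightarrow> (nat \<Rightarrow> complex) \<Rightarrow> (nat \<Rightarrow> nat) \<Rightarrow>
      ('n \<times> nat) \<Rightarrow> 'n Spoly" where
  "var_image T \<phi> \<psi> v = sg 0 (\<phi> (snd v)) * loopv (T (basisv (fst v))) (\<psi> (snd v))"

lemma derivation_var_image_loopv:
  assumes "clinear T"
  shows "derivation (var_image T \<phi> \<psi>) (loopv x k) = sg 0 (\<phi> k) * loopv (T x) (\<psi> k)"
proof -
  have "derivation (var_image T \<phi> \<psi>) (loopv x k)
      = (\<Sum>i\<in>UNIV. sg 0 (x i) * (sg 0 (\<phi> k) * loopv (T (basisv i)) (\<psi> k)))"
    by (simp add: derivation_loopv var_image_def)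
  also have "\<dots> = sg 0 (\<phi> k) * (\<Sum>i\<in>UNIV. loopv (cscale (x i) (T (basisv i))) (\<psi> k))"
    by (simp add: sum_distrib_left loopv_smult algebra_simps)
  also have "\<dots> = sg 0 (\<phi> k) * loopv (T x) (\<psi> k)"
    by (simp add: loopv_sum[symmetric] clinear_basisv_expansion[OF assms, symmetric])
  finally show ?thesis .
qed

lemma derivation_var_image_var_image:
  assumes "clinear T1"
  shows "derivation (var_image T1 \<phi>1 \<psi>1) (var_image T2 \<phi>2 \<psi>2 (i, k)) =
    sg 0 (\<phi>2 k * \<phi>1 (\<psi>2 k)) * loopv (T1 (T2 (basisv i))) (\<psi>1 (\<psi>2 k))"
  by (simp add: var_image_def derivation_smult derivation_var_image_loopv[OF assms] smult_smult)

lemma derivation_cong: "(\<And>v. M v = M' v) \<Longrightarrow> derivation M P = derivation M' P"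
  by (simp add: derivation_def)

lemma derivation_zero_vars: "derivation (\<lambda>v. 0) P = 0"
  by (simp add: derivation_def)

lemma derivation_minus_vars: "derivation (\<lambda>v. - M v) P = - derivation M P"
  by (simp add: derivation_def sum_negf)

lemma derivation_commutator_vars:
  assumes "\<And>v. derivation M (N v) - derivation N (M v) = K v"
  shows "derivation M (derivation N P) = derivation N (derivation M P) + derivation K P"
proof -
  have "derivation (\<lambda>v. derivation M (N v) - derivation N (M v)) P = derivation K P"
    using assms by (rule derivation_cong)
  then show ?thesis using derivation_commutator[of M N P] by simp
qed


definition der_eigen :: "(('n \<times> nat) \<Rightarrow> 'n Spoly) \<Rightarrow> complex \<Rightarrow> 'n Spoly \<Rightarrow> bool" where
  "der_eigen M c Q \<longleftrightarrow> derivation M Q = sg 0 c * Q"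

lemma der_eigen_zero [simp]: "der_eigen M c 0" by (simp add: der_eigen_def)

lemma der_eigen_add: "der_eigen M c Q \<Longrightarrow> der_eigen M c R \<Longrightarrow> der_eigen M c (Q + R)"
  by (simp add: der_eigen_def derivation_add distrib_left)

lemma der_eigen_sum: "(\<And>i. i \<in> I \<Longrightarrow> der_eigen M c (f i)) \<Longrightarrow> der_eigen M c (sum f I)"
  by (induct I rule: infinite_finite_induct) (auto intro: der_eigen_add)

lemma der_eigen_mult:
  assumes "der_eigen M a Q" "der_eigen M b R"
  shows "der_eigen M (a + b) (Q * R)"
proof -
  have "derivation M (Q * R) = (sg 0 a * Q) * R + Q * (sg 0 b * R)"
    using assms by (simp add: der_eigen_def derivation_mult)
  also have "\<dots> = sg 0 a * (Q * R) + sg 0 b * (Q * R)"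
    by (simp only: mult.assoc mult.left_commute[of Q])
  also have "\<dots> = sg 0 (a + b) * (Q * R)" by (simp add: smult_add_left)
  finally show ?thesis by (simp add: der_eigen_def)
qed

lemma der_eigen_smult: assumes "der_eigen M c Q" shows "der_eigen M c (sg 0 a * Q)"
proof -
  have "derivation M (sg 0 a * Q) = sg 0 a * (sg 0 c * Q)"
    using assms by (simp add: der_eigen_def derivation_smult)
  also have "\<dots> = sg 0 c * (sg 0 a * Q)" by (rule mult.left_commute)
  finally show ?thesis by (simp add: der_eigen_def)
qed

lemma der_eigen_const: "der_eigen M 0 (sg 0 c)" by (simp add: der_eigen_def)

lemma der_eigen_independent:
  assumes "finite I" "inj_on c I" "\<And>i. i \<in> I \<Longrightarrow> der_eigen M (c i) (g i)" "(\<Sum>i\<in>I. g i) = 0"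
  shows "\<forall>i\<in>I. g i = 0"
  using assms
proof (induct I arbitrary: g rule: finite_induct)
  case empty then show ?case by simp
next
  case (insert a I)
  define T where "T Q = derivation M Q - sg 0 (c a) * Q" for Q
  have Tadd: "T (Q + R) = T Q + T R" for Q R by (simp add: T_def derivation_add algebra_simps)
  have T0: "T 0 = 0" by (simp add: T_def)
  have Tsum: "T (sum f J) = (\<Sum>j\<in>J. T (f j))" for f and J :: "'a set"
    by (induct J rule: infinite_finite_induct) (simp_all add: Tadd T0)
  have Tg: "T (g i) = sg 0 (c i - c a) * g i" if "i \<in> insert a I" for i
    using insert(5)[OF that] by (simp add: T_def der_eigen_def smult_diff_left)
  have "T (\<Sum>i\<in>insert a I. g i) = 0" using insert(6) by (simp add: T_def)
  then have "(\<Sum>i\<in>I. sg 0 (c i - c a) * g i) = 0"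
    using insert(1,2) Tsum[of g "insert a I"] Tg by simp
  moreover have "der_eigen M (c i) (sg 0 (c i - c a) * g i)" if "i \<in> I" for i
    using insert(5) that by (auto intro: der_eigen_smult)
  ultimately have "\<forall>i\<in>I. sg 0 (c i - c a) * g i = 0"
    using insert(3)[of "\<lambda>i. sg 0 (c i - c a) * g i"] insert(4) by (auto simp: inj_on_insert)
  moreover have "c i - c a \<noteq> 0" if "i \<in> I" for i
    using insert(2,4) that by (auto simp: inj_on_def)
  ultimately have zI: "\<forall>i\<in>I. g i = 0" using smult_eq_0 by blast
  then have "g a = 0" using insert(1,2,6) by simp
  then show ?case using zI by simp
qed

definition eigen_decomp :: "(('n \<times> nat) \<Rightarrow> 'n Spoly) \<Rightarrow> 'n Spoly set \<Rightarrow> 'n Spoly \<Rightarrow> bool" where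
  "eigen_decomp M Z P \<longleftrightarrow> (\<exists>f m. P = (\<Sum>d\<le>m. f d) \<and> (\<forall>d. der_eigen M (of_nat d) (f d)) \<and>
     f 0 \<in> Z \<and> (\<forall>d>m. f d = 0))"

lemma sum_atMost_extend:
  assumes "\<forall>d>m. f d = 0" "m \<le> (m'::nat)"
  shows "(\<Sum>d\<le>m'. f d) = (\<Sum>d\<le>m. f d)"
proof (rule sum.mono_neutral_right)
  show "finite {..m'}" by simp
  show "{..m} \<subseteq> {..m'}" using assms(2) by auto
  show "\<forall>i\<in>{..m'} - {..m}. f i = 0" using assms(1) by auto
qed

lemma eigen_decompI:
  assumes "P = (\<Sum>d\<le>m. f d)" "\<And>d. der_eigen M (of_nat d) (f d)" "f 0 \<in> Z"
  shows "eigen_decomp M Z P"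
proof -
  define f' where "f' d = (if d \<le> m then f d else 0)" for d
  have "P = (\<Sum>d\<le>m. f' d)" using assms(1) by (simp add: f'_def)
  moreover have "\<forall>d. der_eigen M (of_nat d) (f' d)" using assms(2) by (simp add: f'_def)
  moreover have "f' 0 \<in> Z" using assms(3) by (simp add: f'_def)
  moreover have "\<forall>d>m. f' d = 0" by (simp add: f'_def)
  ultimately show ?thesis unfolding eigen_decomp_def by blast
qed

lemma eigen_decomp_add:
  assumes "eigen_decomp M Z P" "eigen_decomp M Z R" "\<And>a b. a \<in> Z \<Longrightarrow> b \<in> Z \<Longrightarrow> a + b \<in> Z"
  shows "eigen_decomp M Z (P + R)"
proof -
  obtain f m where f: "P = (\<Sum>d\<le>m. f d)" "\<forall>d. der_eigen M (of_nat d) (f d)" "f 0 \<in> Z"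
    "\<forall>d>m. f d = 0"
    using assms(1) by (auto simp: eigen_decomp_def)
  obtain g m' where g: "R = (\<Sum>d\<le>m'. g d)" "\<forall>d. der_eigen M (of_nat d) (g d)" "g 0 \<in> Z"
    "\<forall>d>m'. g d = 0"
    using assms(2) by (auto simp: eigen_decomp_def)
  have "P + R = (\<Sum>d\<le>m + m'. f d + g d)"
    using sum_atMost_extend[OF f(4), of "m + m'"] sum_atMost_extend[OF g(4), of "m + m'"] f(1) g(1)
    by (simp add: sum.distrib)
  then show ?thesis
    using f g assms(3)
    by (intro eigen_decompI[where m="m+m'" and f="\<lambda>d. f d + g d"]) (auto intro: der_eigen_add)
qed

lemma sum_atMost_mult_convolution:
  fixes f g :: "nat \<Rightarrow> 'a::semiring_0"
  shows "(\<Sum>a\<le>m. f a) * (\<Sum>b\<le>n. g b) = (\<Sum>d\<le>m + n. \<Sum>a\<le>m. \<Sum>b\<le>n. if a + b = d then f a * g b else 0)"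
proof -
  have "(\<Sum>a\<le>m. f a) * (\<Sum>b\<le>n. g b) = (\<Sum>a\<le>m. \<Sum>b\<le>n. f a * g b)"
    by (rule sum_product)
  also have "\<dots> = (\<Sum>a\<le>m. \<Sum>b\<le>n. \<Sum>d\<le>m + n. if a + b = d then f a * g b else 0)"
    by (intro sum.cong refl) (simp add: sum.delta)
  also have "\<dots> = (\<Sum>a\<le>m. \<Sum>d\<le>m + n. \<Sum>b\<le>n. if a + b = d then f a * g b else 0)"
    by (rule sum.cong[OF refl], rule sum.swap)
  also have "\<dots> = (\<Sum>d\<le>m + n. \<Sum>a\<le>m. \<Sum>b\<le>n. if a + b = d then f a * g b else 0)"
    by (rule sum.swap)
  finally show ?thesis .
qed

lemma eigen_decomp_mult:
  assumes "eigen_decomp M Z P" "eigen_decomp M Z R" "\<And>a b. a \<in> Z \<Longrightarrow> b \<in> Z \<Longrightarrow> a * b \<in> Z"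
  shows "eigen_decomp M Z (P * R)"
proof -
  obtain f m where f: "P = (\<Sum>d\<le>m. f d)" "\<forall>d. der_eigen M (of_nat d) (f d)" "f 0 \<in> Z"
    "\<forall>d>m. f d = 0"
    using assms(1) by (auto simp: eigen_decomp_def)
  obtain g m' where g: "R = (\<Sum>d\<le>m'. g d)" "\<forall>d. der_eigen M (of_nat d) (g d)" "g 0 \<in> Z"
    "\<forall>d>m'. g d = 0"
    using assms(2) by (auto simp: eigen_decomp_def)
  define h where "h d = (\<Sum>a\<le>m. \<Sum>b\<le>m'. if a + b = d then f a * g b else 0)" for d
  have PR: "P * R = (\<Sum>d\<le>m + m'. h d)"
    unfolding f(1) g(1) h_def by (rule sum_atMost_mult_convolution)
  have eh: "der_eigen M (of_nat d) (h d)" for d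
    unfolding h_def
  proof (intro der_eigen_sum)
    fix a b
    show "der_eigen M (of_nat d) (if a + b = d then f a * g b else 0)"
      using der_eigen_mult[OF f(2)[rule_format, of a] g(2)[rule_format, of b]] by auto
  qed
  have "h 0 = f 0 * g 0"
  proof -
    have "h 0 = (\<Sum>a\<le>m. if a = 0 then f 0 * g 0 else 0)"
      unfolding h_def by (intro sum.cong refl) (auto simp: sum.delta)
    then show ?thesis by (simp add: sum.delta)
  qed
  then have "h 0 \<in> Z" using f(3) g(3) assms(3) by simp
  then show ?thesis using PR eh by (intro eigen_decompI) auto
qed

lemma eigen_decomp_all:
  assumes cZ: "\<And>c. sg 0 c \<in> Z"
    and addZ: "\<And>a b. a \<in> Z \<Longrightarrow> b \<in> Z \<Longrightarrow> a + b \<in> Z"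
    and multZ: "\<And>a b. a \<in> Z \<Longrightarrow> b \<in> Z \<Longrightarrow> a * b \<in> Z"
    and varZ: "\<And>v. eigen_decomp M Z (pvar v)"
  shows "eigen_decomp M Z P"
proof (induct P rule: mpoly_induct)
  case (const c)
  show ?case
    by (rule eigen_decompI[where m=0 and f="\<lambda>d. if d = 0 then sg 0 c else 0"])
      (auto simp: cZ der_eigen_const)
next
  case (var v) show ?case by (rule varZ)
next
  case (add P R) then show ?case using eigen_decomp_add addZ by blast
next
  case (mult P R) then show ?case using eigen_decomp_mult multZ by blast
qed

lemma eigen_decomp_independent:
  assumes "(\<Sum>d\<le>m. g d) = 0" "\<And>d. d \<le> m \<Longrightarrow> der_eigen M (of_nat d) (g d)"
  shows "\<forall>d\<le>m. g d = 0"
  using der_eigen_independent[of "{..m}" "\<lambda>d. of_nat d" M g] assms by (auto simp: inj_on_def)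


declare single_of_nat[simp del] single_numeral[simp del] single_of_int[simp del]

lemma derivation_pow_add:
  "(derivation M ^^ k) (P + Q) = (derivation M ^^ k) P + (derivation M ^^ k) Q"
  by (induct k) (auto simp: derivation_add)

lemma derivation_pow_zero: "(derivation M ^^ k) 0 = 0"
  by (induct k) auto

lemma derivation_pow_sum: "(derivation M ^^ k) (sum f I) = (\<Sum>i\<in>I. (derivation M ^^ k) (f i))"
  by (induct I rule: infinite_finite_induct) (auto simp: derivation_pow_add derivation_pow_zero)

text \<open>In this notation \<open>D x[-m] = (A x)[-m-1]\<close>,
  \<open>N x[-m] = (proj x)[-m]\<close>, \<open>L x[-m] = (m - 1) (G x)[-m+1]\<close> and \<open>W x[-m] = m x[-m]\<close>.\<close>
locale loop_derivations = group_invertible A for A :: "('n::finite \<Rightarrow> complex) \<Rightarrow> ('n \<Rightarrow> complex)" +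
  fixes H :: "('n \<Rightarrow> complex) set"
  assumes H_eq: "H = {x. A x = 0}"
begin

definition proj :: "('n \<Rightarrow> complex) \<Rightarrow> ('n \<Rightarrow> complex)" where
  "proj x = A (G x)"

lemma clinear_proj: "clinear proj"
  unfolding proj_def
    using Vector_Spaces.linear_compose[OF clinear_G clinear_A] by (simp add: comp_def)

lemma A_proj: "A (proj x) = A x" unfolding proj_def A_G[of x] by (rule A_G_A)
lemma proj_A: "proj (A x) = A x" unfolding proj_def by (rule A_G_A)
lemma proj_G: "proj (G x) = G x" unfolding proj_def A_G[of "G x"] by (rule G_A_G)
lemma G_proj: "G (proj x) = G x" unfolding proj_def by (rule G_A_G)
lemma proj_proj: "proj (proj x) = proj x" unfolding proj_def G_A_G ..

definition "D_vars = var_image A (\<lambda>_. 1) Suc"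
definition "N_vars = var_image proj (\<lambda>_. 1) id"
definition "L_vars = var_image G of_nat (\<lambda>k. k - 1)"
definition "W_vars = var_image (\<lambda>x. x) (\<lambda>k. of_nat (Suc k)) (\<lambda>k. k)"

abbreviation "D \<equiv> derivation D_vars"
abbreviation "N \<equiv> derivation N_vars"
abbreviation "L \<equiv> derivation L_vars"
abbreviation "W \<equiv> derivation W_vars"

lemma L_D_commutator: "L (D P) = D (L P) + N P"
proof (rule derivation_commutator_vars)
  fix v :: "'n \<times> nat"
  obtain i k where v: "v = (i, k)" by fastforce
  have LD: "derivation L_vars (D_vars v) = sg 0 (of_nat (Suc k)) * loopv (A (G (basisv i))) k"
    by (simp add: v D_vars_def L_vars_def derivation_var_image_var_image[OF clinear_G] A_G)
  have DL: "derivation D_vars (L_vars v) = sg 0 (of_nat k) * loopv (A (G (basisv i))) k"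
    by (cases k)
      (simp_all add: v D_vars_def L_vars_def derivation_var_image_var_image[OF clinear_A])
  have "derivation L_vars (D_vars v) - derivation D_vars (L_vars v)
      = sg 0 (of_nat (Suc k) - of_nat k) * loopv (A (G (basisv i))) k"
    unfolding LD DL by (rule smult_diff_left[symmetric])
  also have "\<dots> = N_vars v" by (simp add: v N_vars_def var_image_def proj_def)
  finally show "derivation L_vars (D_vars v) - derivation D_vars (L_vars v) = N_vars v" .
qed

lemma N_D_commute: "N (D P) = D (N P)"
proof -
  have "derivation N_vars (D_vars v) - derivation D_vars (N_vars v) = 0" for v
    by (cases v) (simp add: D_vars_def N_vars_def derivation_var_image_var_image[OF clinear_A]
        derivation_var_image_var_image[OF clinear_proj] proj_A A_proj)
  then show ?thesis
    using derivation_commutator_vars[of N_vars D_vars "\<lambda>_. 0" P] derivation_zero_vars by simp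
qed

lemma N_L_commute: "N (L P) = L (N P)"
proof -
  have "derivation N_vars (L_vars v) - derivation L_vars (N_vars v) = 0" for v
    by (cases v) (simp add: L_vars_def N_vars_def derivation_var_image_var_image[OF clinear_G]
        derivation_var_image_var_image[OF clinear_proj] proj_G G_proj)
  then show ?thesis
    using derivation_commutator_vars[of N_vars L_vars "\<lambda>_. 0" P] derivation_zero_vars by simp
qed

lemma W_L_commutator: "W (L P) = L (W P) - L P"
proof -
  have "derivation W_vars (L_vars v) - derivation L_vars (W_vars v) = - L_vars v" for v
  proof -
    obtain i k where v: "v = (i, k)" by fastforce
    show ?thesis
    proof (cases k)
      case 0 then show ?thesis
        by (simp add: v L_vars_def W_vars_def var_image_def derivation_smult
            derivation_var_image_loopv[OF clinear_G])
    next
      case (Suc j)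
      have L_v: "L_vars v = sg 0 (of_nat k) * loopv (G (basisv i)) j"
        using Suc by (simp add: v L_vars_def var_image_def)
      have "derivation W_vars (L_vars v) - derivation L_vars (W_vars v)
          = sg 0 (of_nat k * of_nat k - of_nat (Suc k) * of_nat k) * loopv (G (basisv i)) j"
        using Suc by (simp add: v L_vars_def W_vars_def derivation_var_image_var_image[OF clinear_G]
            derivation_var_image_var_image[OF vector_space.linear_ident[OF vector_space_cscale]]
            smult_diff_left)
      also have "of_nat k * of_nat k - of_nat (Suc k) * of_nat k = - (of_nat k :: complex)"
        by (simp add: algebra_simps)
      also have "sg 0 (- of_nat k) * loopv (G (basisv i)) j = - L_vars v"
        by (simp only: L_v single_uminus mult_minus_left)
      finally show ?thesis .
    qed
  qed
  then show ?thesis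
    using derivation_commutator_vars[of W_vars L_vars "\<lambda>v. - L_vars v" P]
      derivation_minus_vars[of L_vars P]
    by simp
qed

lemma D_loopv: "D (loopv x k) = loopv (A x) (Suc k)"
  by (simp add: D_vars_def derivation_var_image_loopv[OF clinear_A])

lemma N_loopv: "N (loopv x k) = loopv (proj x) k"
  by (simp add: N_vars_def derivation_var_image_loopv[OF clinear_proj])

lemma D_Sh: "P \<in> Sh H \<Longrightarrow> D P = 0"
proof (induct rule: Sh.induct)
  case (const c) then show ?case by simp
next
  case (gen x k) then show ?case using H_eq by (simp add: D_loopv)
next
  case (add P Q) then show ?case by (simp add: derivation_add)
next
  case (mult P Q) then show ?case by (simp add: derivation_mult)
qed

lemma eigen_decomp_W_pvar: "eigen_decomp W_vars UNIV (pvar v)"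
proof -
  obtain i k where v: "v = (i, k)" by (cases v)
  have "der_eigen W_vars (of_nat (Suc k)) (pvar v)"
    by (simp add: v der_eigen_def W_vars_def var_image_def loopv_basis)
  then show "eigen_decomp W_vars UNIV (pvar v)"
    by (intro eigen_decompI[where m="Suc k" and f="\<lambda>d. if d = Suc k then pvar v else 0"]) auto
qed

lemma eigen_decomp_W: "eigen_decomp W_vars UNIV P"
  by (rule eigen_decomp_all) (auto simp: eigen_decomp_W_pvar)

lemma eigen_decomp_N: "eigen_decomp N_vars (Sh H) P"
proof (rule eigen_decomp_all)
  fix v :: "'n \<times> nat"
  obtain i k where v: "v = (i, k)" by (cases v)
  define b where "b = basisv i"
  have dec: "pvar v = loopv (b - proj b) k + loopv (proj b) k"
    by (simp add: v b_def loopv_basis[symmetric] loopv_diff)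
  have e0: "der_eigen N_vars 0 (loopv (b - proj b) k)"
    by (simp add: der_eigen_def N_loopv cvs2.linear_diff[OF clinear_proj] proj_proj)
  have e1: "der_eigen N_vars 1 (loopv (proj b) k)"
    by (simp add: der_eigen_def N_loopv proj_proj)
  have "b - proj b \<in> H" using H_eq by (simp add: cvs2.linear_diff[OF clinear_A] A_proj)
  then have inSh: "loopv (b - proj b) k \<in> Sh H" by (rule Sh.gen)
  define f where
    "f d = (if d = 0 then loopv (b - proj b) k else if d = 1 then loopv (proj b) k else 0)" for d :: nat
  show "eigen_decomp N_vars (Sh H) (pvar v)"
    by (rule eigen_decompI[where m=1 and f=f])
      (use dec e0 e1 inSh in \<open>auto simp: f_def One_nat_def atMost_Suc\<close>)
qed (auto intro: Sh.intros)

lemma der_eigen_W_neg_one: "der_eigen W_vars (-1) R \<Longrightarrow> R = 0"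
proof -
  assume "der_eigen W_vars (-1) R"
  then have W_R: "W R = - R" by (simp add: der_eigen_def smult_neg1)
  obtain f m where f: "R = (\<Sum>d\<le>m. f d)" "\<forall>d. der_eigen W_vars (of_nat d) (f d)"
    using eigen_decomp_W[of R] by (auto simp: eigen_decomp_def)
  have "(\<Sum>d\<le>m. sg 0 (of_nat (Suc d)) * f d) = (\<Sum>d\<le>m. f d + sg 0 (of_nat d) * f d)"
    by (intro sum.cong refl) (simp add: smult_add_left)
  also have "\<dots> = R + W R" using f by (simp add: sum.distrib derivation_sum der_eigen_def)
  also have "\<dots> = 0" using W_R by simp
  finally have "(\<Sum>d\<le>m. sg 0 (of_nat (Suc d)) * f d) = 0" .
  moreover have "der_eigen W_vars (of_nat d) (sg 0 (of_nat (Suc d)) * f d)" for d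
    using f(2) by (simp add: der_eigen_smult)
  ultimately have "\<forall>d\<le>m. sg 0 (of_nat (Suc d)) * f d = 0"
    using eigen_decomp_independent[where M=W_vars] by blast
  then have "\<forall>d\<le>m. f d = 0" using smult_eq_0 by (metis of_nat_eq_0_iff nat.distinct(1))
  then show ?thesis using f(1) by simp
qed

lemma L_der_eigen_W:
  assumes "der_eigen W_vars (of_nat w) Q"
  shows "der_eigen W_vars (of_nat w - 1) (L Q)"
proof -
  have "W (L Q) = L (sg 0 (of_nat w) * Q) - L Q"
    using W_L_commutator[of Q] assms by (simp add: der_eigen_def)
  also have "\<dots> = sg 0 (of_nat w - 1) * L Q" by (simp add: derivation_smult smult_diff_left)
  finally show ?thesis by (simp add: der_eigen_def)
qed

lemma L_pow_der_eigen_W: "der_eigen W_vars (of_nat w) Q \<Longrightarrow> (L ^^ Suc w) Q = 0"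
proof (induct w arbitrary: Q)
  case 0
  have "der_eigen W_vars (-1) (L Q)" using L_der_eigen_W[OF 0] by simp
  then have "L Q = 0" by (rule der_eigen_W_neg_one)
  then show ?case by simp
next
  case (Suc w)
  have "der_eigen W_vars (of_nat w) (L Q)" using L_der_eigen_W[OF Suc(2)] by simp
  then have "(L ^^ Suc w) (L Q) = 0" by (rule Suc(1))
  then show ?case by (metis funpow_Suc_right comp_apply)
qed

lemma L_locally_nilpotent: "\<exists>K. (L ^^ K) P = 0"
proof -
  obtain f m where f: "P = (\<Sum>d\<le>m. f d)" "\<forall>d. der_eigen W_vars (of_nat d) (f d)"
    using eigen_decomp_W[of P] by (auto simp: eigen_decomp_def)
  have "(L ^^ Suc m) (f d) = 0" if "d \<le> m" for d
  proof -
    have "(L ^^ Suc m) (f d) = (L ^^ (m - d)) ((L ^^ Suc d) (f d))"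
      using that
      by (metis Suc_diff_le diff_Suc_Suc funpow_add comp_apply le_add_diff_inverse2 add_Suc_right)
    also have "(L ^^ Suc d) (f d) = 0" using L_pow_der_eigen_W f(2) by blast
    finally show ?thesis by (simp add: derivation_pow_zero)
  qed
  have "(L ^^ Suc m) P = (\<Sum>d\<le>m. (L ^^ Suc m) (f d))" by (simp only: f(1) derivation_pow_sum)
  then have "(L ^^ Suc m) P = 0" using \<open>\<And>d. d \<le> m \<Longrightarrow> (L ^^ Suc m) (f d) = 0\<close> by simp
  then show ?thesis by blast
qed

lemma der_eigen_N_L_pow: "der_eigen N_vars c Q \<Longrightarrow> der_eigen N_vars c ((L ^^ j) Q)"
  by (induct j) (simp_all add: der_eigen_def N_L_commute derivation_smult)

lemma D_L_pow_Suc: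
  assumes "D Q = 0" and "der_eigen N_vars (of_nat d) Q"
  shows "D ((L ^^ Suc j) Q) = - (sg 0 (of_nat (Suc j) * of_nat d) * (L ^^ j) Q)"
proof (induct j)
  case 0
  have "L (D Q) = D (L Q) + N Q" by (rule L_D_commutator)
  then show ?case using assms by (simp add: der_eigen_def eq_neg_iff_add_eq_0 add.commute)
next
  case (Suc j)
  define X where "X = (L ^^ Suc j) Q"
  have "D (L X) = L (D X) - N X" using L_D_commutator[of X] by (simp add: algebra_simps)
  also have "L (D X) = - (sg 0 (of_nat (Suc j) * of_nat d) * X)"
    using Suc by (simp add: X_def derivation_neg derivation_smult)
  also have "N X = sg 0 (of_nat d) * X"
    using der_eigen_N_L_pow[OF assms(2), of "Suc j"] by (simp add: der_eigen_def X_def)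
  also have "- (sg 0 (of_nat (Suc j) * of_nat d) * X) - sg 0 (of_nat d) * X
      = - (sg 0 (of_nat (Suc (Suc j)) * of_nat d) * X)"
  proof -
    have "sg 0 (of_nat (Suc (Suc j)) * of_nat d) * X
        = sg 0 (of_nat (Suc j) * of_nat d) * X + sg 0 (of_nat d) * X"
      by (subst smult_add_left[symmetric]) (simp add: algebra_simps)
    then show ?thesis by simp
  qed
  finally show ?case by (simp add: X_def)
qed

lemma D_kernel_N_eigen:
  assumes "D Q = 0" and "der_eigen N_vars (of_nat d) Q" and "d \<noteq> 0"
  shows "Q = 0"
proof -
  have step: "(L ^^ j) Q = 0" if "(L ^^ Suc j) Q = 0" for j
  proof -
    have "sg 0 (of_nat (Suc j) * of_nat d) * (L ^^ j) Q = 0"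
      using D_L_pow_Suc[OF assms(1,2), of j] that by simp
    then show ?thesis
      using smult_eq_0 assms(3) by (metis mult_eq_0_iff of_nat_eq_0_iff nat.distinct(1))
  qed
  obtain K where "(L ^^ K) Q = 0" using L_locally_nilpotent by blast
  then have "(L ^^ 0) Q = 0"
  proof (induct K)
    case (Suc K) then show ?case using step by blast
  qed simp
  then show ?thesis by simp
qed

theorem ker_D_eq_Sh: "{P. D P = 0} = Sh H"
proof (intro set_eqI iffI)
  fix P assume "P \<in> Sh H" then show "P \<in> {P. D P = 0}" using D_Sh by blast
next
  fix P assume "P \<in> {P. D P = 0}"
  then have D0: "D P = 0" by simp
  obtain f m where f: "P = (\<Sum>d\<le>m. f d)" "\<forall>d. der_eigen N_vars (of_nat d) (f d)" "f 0 \<in> Sh H"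
    using eigen_decomp_N[of P] by (auto simp: eigen_decomp_def)
  have "(\<Sum>d\<le>m. D (f d)) = 0" using D0 f(1) by (simp add: derivation_sum)
  moreover have "der_eigen N_vars (of_nat d) (D (f d))" for d
    using N_D_commute[of "f d"] f(2) by (simp add: der_eigen_def derivation_smult)
  ultimately have Dz: "\<forall>d\<le>m. D (f d) = 0"
    using eigen_decomp_independent[where m=m and g="\<lambda>d. D (f d)" and M=N_vars] by blast
  have "\<forall>d\<le>m. d \<noteq> 0 \<longrightarrow> f d = 0" using D_kernel_N_eigen Dz f(2) by blast
  then have "P = f 0"
    using f(1) by (simp add: sum.atMost_shift[symmetric] atMost_atLeast0 sum.atLeast_Suc_atMost)
  then show "P \<in> Sh H" using f(3) by simp
qed

end

lemma pderiv_var_loopv_0: "pderiv_var (j, k) (loopv x 0) = (if k = 0 then sg 0 (x j) else 0)"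
proof -
  have "pderiv_var (j, k) (loopv x 0) = (\<Sum>i\<in>UNIV. sg 0 (x i) * (if (j, k) = (i, 0) then 1 else 0))"
    by (simp add: loopv_alt pderiv_var_sum pderiv_var_smult pderiv_var_pvar)
  also have "\<dots> = (\<Sum>i\<in>UNIV. if i = j \<and> k = 0 then sg 0 (x j) else 0)"
    by (intro sum.cong) auto
  also have "\<dots> = (if k = 0 then sg 0 (x j) else 0)"
    by (cases "k = 0") (simp_all add: sum.delta)
  finally show ?thesis .
qed

lemma sum_vars_loopv_0:
  fixes x :: "'n::finite \<Rightarrow> complex"
  shows "(\<Sum>a\<in>vars (loopv x 0). pderiv_var a (loopv x 0) * g a) = (\<Sum>i\<in>UNIV. sg 0 (x i) * g (i, 0))"
proof -
  define R where "R = (\<lambda>i. (i, 0::nat)) ` (UNIV :: 'n set)"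
  have "(\<Sum>a\<in>vars (loopv x 0). pderiv_var a (loopv x 0) * g a)
      = (\<Sum>a\<in>vars (loopv x 0) \<union> R. pderiv_var a (loopv x 0) * g a)"
    by (rule sum.mono_neutral_left) (auto simp: vars_finite R_def pderiv_var_not_in_vars)
  also have "\<dots> = (\<Sum>a\<in>R. pderiv_var a (loopv x 0) * g a)"
    by (rule sum.mono_neutral_right) (auto simp: vars_finite R_def pderiv_var_loopv_0)
  also have "\<dots> = (\<Sum>i\<in>UNIV. sg 0 (x i) * g (i, 0))"
    unfolding R_def by (subst sum.reindex) (auto simp: inj_on_def pderiv_var_loopv_0)
  finally show ?thesis .
qed

lemma poisson_loopv_0_eq_derivation:
  fixes br :: "('n::finite \<Rightarrow> complex) \<Rightarrow> ('n \<Rightarrow> complex) \<Rightarrow> ('n \<Rightarrow> complex)"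
  assumes L: "lie_algebra br"
  shows "poisson br (loopv h 0) P = derivation (var_image (br h) (\<lambda>_. 1) Suc) P"
proof -
  define u where "u = loopv h 0"
  have inner: "(\<Sum>a\<in>vars u. pderiv_var a u *
      loopv (br (basisv (fst a)) (basisv (fst b))) (snd a + snd b + 1)) = var_image (br h) (\<lambda>_. 1) Suc b"
    for b
  proof -
    have "(\<Sum>i\<in>UNIV. cscale (h i) (br (basisv i) (basisv (fst b)))) = br h (basisv (fst b))"
      using clinear_basisv_expansion[OF lie_algebra_clinear_left[OF L, where y="basisv (fst b)"],
          of h]
      by simp
    then show ?thesis
      by (simp add: u_def sum_vars_loopv_0 var_image_def loopv_sum[symmetric] loopv_smult[symmetric]
          Suc_eq_plus1)
  qed
  have "poisson br u P = (\<Sum>b\<in>vars P. pderiv_var b P * (\<Sum>a\<in>vars u. pderiv_var a u *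
      loopv (br (basisv (fst a)) (basisv (fst b))) (snd a + snd b + 1)))"
    unfolding poisson_def by (subst sum.swap) (simp add: sum_distrib_left algebra_simps)
  also have "\<dots> = derivation (var_image (br h) (\<lambda>_. 1) Suc) P"
    by (simp only: inner derivation_def)
  finally show ?thesis by (simp only: u_def)
qed

theorem lemma4:
  fixes br :: "('n::finite \<Rightarrow> complex) \<Rightarrow> ('n \<Rightarrow> complex) \<Rightarrow> ('n \<Rightarrow> complex)"
    and H :: "('n \<Rightarrow> complex) set"
    and e h f :: "'n \<Rightarrow> complex"
  assumes "semisimple br"
    and "cartan_subalgebra br H"
    and "principal_sl2_triple br H e h f"
    and "h \<in> H"
  shows "poisson_centralizer br (loopv h 0) = Sh H"
proof -
  \<comment> \<open>Semisimplicity is only used through the Lie algebra axioms.\<close>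
  have L: "lie_algebra br" using assms(1) by (simp add: semisimple_def)
  interpret sl2_action "br h" "br e" "br f"
    using sl2_action_ad[OF L] assms(3) by (simp add: principal_sl2_triple_def)
  have "H = {x. br h x = 0}" by (rule cartan_subalgebra_eq_ker_ad[OF L assms(2-4)])
  then interpret loop_derivations "br h" H
    using clinear_A ker_A_sq
    by (intro loop_derivations.intro group_invertible.intro)
      (simp_all add: loop_derivations_axioms_def)
  have "poisson_centralizer br (loopv h 0) = {P. D P = 0}"
    by (simp add: poisson_centralizer_def poisson_loopv_0_eq_derivation[OF L] D_vars_def)
  also have "\<dots> = Sh H" by (rule ker_D_eq_Sh)
  finally show ?thesis .
qed

end
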